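(* Let $n\ge 3$ and let $(X,Y,Z)$ be a triple in $\mathfrak{so}(2,n)$ with $[X,Y]=Z$, $[X,Z]=[Y,Z]=0$ and $Z\neq 0$. If $Z\in\mathfrak{p}$, then $Z$ is a light-like translation of the Minkowski patch $M_{x_0}$; equivalently, there exists $p\in P$ with $\mathrm{Ad}(p)Z\in\mathfrak{g}_{\alpha+\beta}$.
   Context: Let $Q=2u_0u_{n+1}+2u_1u_n+u_2^2+\dots+u_{n-1}^2$ on $\mathbf{R}^{n+2}$, and let $\mathrm{Ein}^{1,n-1}=\mathbb{P}(\{Q=0\})$ be the Einstein universe with its conformally flat Lorentzian structure, whose conformal group is $G=\mathrm{PO}(2,n)$; identify $\mathfrak{so}(2,n)$ with the Lie algebra of conformal vector fields of $\mathrm{Ein}^{1,n-1}$. Let $x_0=[e_0]$, $P<G$ its stabilizer, $\mathfrak{p}$ its Lie algebra. The stereographic projection $s_{x_0}:\mathbf{R}^{1,n-1}\to\mathrm{Ein}^{1,n-1}$, $s_{x_0}(v)=[-\langle v,v\rangle/2:v_1:\dots:v_n:1]$ with $\langle v,v\rangle=2v_1v_n+v_2^2+\dots+v_{n-1}^2$, is a conformal diffeomorphism onto the open dense set $M_{x_0}$ (the Minkowski patch), conjugating $P$ to the affine conformal group $\mathrm{CO}(1,n-1)\ltimes\mathbf{R}^n$. An element $Z\in\mathfrak{so}(2,n)$ is a light-like translation of $M_{x_0}$ if $Z$ fixes $x_0$ and $s_{x_0}^*Z$ is the constant vector field given by a nonzero null vector of $\mathbf{R}^{1,n-1}$. In terms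 of the restricted roots $\alpha,\beta$ of the Cartan subalgebra $\{\mathrm{diag}(\lambda,\mu,0,\dots,0,-\mu,-\lambda)\}$, with $\alpha=\lambda$, $\beta=\mu$, the light-like translations form the $\mathrm{Ad}(P)$-orbit of $\mathfrak{g}_{\alpha+\beta}\setminus\{0\}$. *)

theory Defs
  imports Complex_Main
begin

text \<open>Matrices of size (n+2) x (n+2), indices 0..n+1, represented as
  functions nat => nat => real vanishing outside the index range.
  Vectors of R^{n+2} are nat => real (indices 0..n+1); vectors of
  Minkowski space R^{1,n-1} are nat => real (indices 1..n).\<close>

type_synonym mat = "nat \<Rightarrow> nat \<Rightarrow> real"

definition supported :: "nat \<Rightarrow> mat \<Rightarrow> bool" where
  "supported n A \<longleftrightarrow> (\<forall>i j. (n + 1 < i \<or> n + 1 < j) \<longrightarrow> A i j = 0)"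

definition mmul :: "nat \<Rightarrow> mat \<Rightarrow> mat \<Rightarrow> mat" where
  "mmul n A B = (\<lambda>i j. if i \<le> n + 1 \<and> j \<le> n + 1 then (\<Sum>k\<le>n+1. A i k * B k j) else 0)"

definition mtransp :: "mat \<Rightarrow> mat" where
  "mtransp A = (\<lambda>i j. A j i)"

definition idm :: "nat \<Rightarrow> mat" where
  "idm n = (\<lambda>i j. if i = j \<and> i \<le> n + 1 then 1 else 0)"

definition bracket :: "nat \<Rightarrow> mat \<Rightarrow> mat \<Rightarrow> mat" where
  "bracket n A B = (\<lambda>i j. mmul n A B i j - mmul n B A i j)"

text \<open>Gram matrix of Q = 2u_0u_{n+1} + 2u_1u_n + u_2^2 + ... + u_{n-1}^2.\<close>
definition Jm :: "nat \<Rightarrow> mat" where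
  "Jm n = (\<lambda>i j. if (i = 0 \<and> j = n + 1) \<or> (i = n + 1 \<and> j = 0) \<or> (i = 1 \<and> j = n) \<or> (i = n \<and> j = 1)
                     \<or> (2 \<le> i \<and> i \<le> n - 1 \<and> i = j) then 1 else 0)"

definition so2n :: "nat \<Rightarrow> mat set" where
  "so2n n = {A. supported n A \<and>
      (\<forall>i j. mmul n (mtransp A) (Jm n) i j + mmul n (Jm n) A i j = 0)}"

text \<open>The orthogonal group O(2,n) = O(Q) (matrix representatives of PO(2,n)).\<close>
definition O2n :: "nat \<Rightarrow> mat set" where
  "O2n n = {g. supported n g \<and> mmul n (mtransp g) (mmul n (Jm n) g) = Jm n}"

text \<open>Stabilizers of x_0 = [e_0]: P (group, via representatives in O(2,n)) and its Lie algebra p.\<close>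
definition Pgrp :: "nat \<Rightarrow> mat set" where
  "Pgrp n = {g \<in> O2n n. \<forall>i. 1 \<le> i \<and> i \<le> n + 1 \<longrightarrow> g i 0 = 0}"

definition palg :: "nat \<Rightarrow> mat set" where
  "palg n = {A \<in> so2n n. \<forall>i. 1 \<le> i \<and> i \<le> n + 1 \<longrightarrow> A i 0 = 0}"

definition cartanH :: "nat \<Rightarrow> real \<Rightarrow> real \<Rightarrow> mat" where
  "cartanH n l m = (\<lambda>i j. if i = j then (if i = 0 then l else if i = 1 then m
                                       else if i = n then - m else if i = n + 1 then - l else 0)
                         else 0)"

text \<open>Restricted root space g_{alpha+beta}, where alpha(H) = lambda, beta(H) = mu.\<close>
definition root_space_ab :: "nat \<Rightarrow> mat set" where
  "root_space_ab n = {Z \<in> so2n n. \<forall>l m. bracket n (cartanH n l m) Z = (\<lambda>i j. (l + m) * Z i j)}"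

definition mink :: "nat \<Rightarrow> (nat \<Rightarrow> real) \<Rightarrow> (nat \<Rightarrow> real) \<Rightarrow> real" where
  "mink n v w = v 1 * w n + v n * w 1 + (\<Sum>i\<in>{2..n-1}. v i * w i)"

definition stereo_lift :: "nat \<Rightarrow> (nat \<Rightarrow> real) \<Rightarrow> (nat \<Rightarrow> real)" where
  "stereo_lift n v = (\<lambda>i. if i = 0 then - mink n v v / 2 else if i \<le> n then v i
                          else if i = n + 1 then 1 else 0)"

definition mvec :: "nat \<Rightarrow> mat \<Rightarrow> (nat \<Rightarrow> real) \<Rightarrow> (nat \<Rightarrow> real)" where
  "mvec n A x = (\<lambda>i. if i \<le> n + 1 then (\<Sum>k\<le>n+1. A i k * x k) else 0)"

text \<open>Pull-back s^*Z at v: the conformal vector field of Z at [x] is Zx mod x;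
  writing Z s(v) = d(lift)_v(w) + c s(v) with d(lift)_v(w) = (-<v,w>, w, 0),
  one gets c = (Z s(v))_{n+1} and w_i = (Z s(v))_i - c v_i (1 <= i <= n).\<close>
definition pullback_field :: "nat \<Rightarrow> mat \<Rightarrow> (nat \<Rightarrow> real) \<Rightarrow> (nat \<Rightarrow> real)" where
  "pullback_field n Z v = (let x = mvec n Z (stereo_lift n v) in
       (\<lambda>i. if 1 \<le> i \<and> i \<le> n then x i - x (n + 1) * v i else 0))"

definition minkvec :: "nat \<Rightarrow> (nat \<Rightarrow> real) \<Rightarrow> bool" where
  "minkvec n v \<longleftrightarrow> (\<forall>i. (i = 0 \<or> n < i) \<longrightarrow> v i = 0)"

definition lightlike_translation :: "nat \<Rightarrow> mat \<Rightarrow> bool" where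
  "lightlike_translation n Z \<longleftrightarrow> Z \<in> palg n \<and>
     (\<exists>w. minkvec n w \<and> w \<noteq> (\<lambda>_. 0) \<and> mink n w w = 0 \<and>
          (\<forall>v. minkvec n v \<longrightarrow> pullback_field n Z v = w))"

end

theory Submission
  imports Defs "Jordan_Normal_Form.Schur_Decomposition"
begin

text \<open>
  Since Z = [X, Y] commutes with X, every power of Z is traceless, so Z is nilpotent. An element
  of p annihilating e0 is a translation by some q in R^{1,n-1} plus a Lorentz part M, and M is
  nilpotent as well. The Heisenberg relations forbid a subspace with a basis s_1..s_m,
  Z s_1..Z s_m on which Z^2 = 0 and which X and Y preserve: in that basis the Z s-block of [X, Y]
  would be the identity, but it is a sum of commutators and hence traceless. Images of powers of Z
  are X- and Y-invariant, and such a subspace can be found among them if M is nonzero (M is then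
  a null rotation) or if q is not null. So Z is the translation by a nonzero null vector q, and
  conjugating by the reflection of R^{1,n-1} that moves q onto the e_1 axis takes Z into the root
  space g_{alpha+beta}.
\<close>

hide_type (open) Matrix.mat

section \<open>Nilpotency from vanishing traces\<close>

lemma sum_eq_single:
  assumes "finite A" "a \<in> A" "\<And>x. x \<in> A \<Longrightarrow> x \<noteq> a \<Longrightarrow> g x = 0"
  shows "sum g A = g a"
  using assms by (subst sum.mono_neutral_right[of A "{a}"]) auto

lemma power_sums_zero_imp_weights_zero:
  fixes S :: "complex set"
  assumes "finite S" "0 \<notin> S" "\<forall>k>0. (\<Sum>v\<in>S. c v * v ^ k) = 0"
  shows "\<forall>v\<in>S. c v = 0"
  using assms
proof (induction S arbitrary: c rule: finite_induct)
  case empty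
  then show ?case by simp
next
  case (insert a S)
  have sums: "(\<Sum>v\<in>S. c v * v ^ k) = - (c a * a ^ k)" if "k > 0" for k
    using insert that by (simp add: sum.insert eq_neg_iff_add_eq_0 add.commute)
  \<comment> \<open>Multiplying the weights by v - a kills the term of a.\<close>
  have "\<forall>k>0. (\<Sum>v\<in>S. c v * (v - a) * v ^ k) = 0"
  proof (intro allI impI)
    fix k :: nat assume k: "k > 0"
    have "(\<Sum>v\<in>S. c v * (v - a) * v ^ k) = (\<Sum>v\<in>S. c v * v ^ Suc k - a * (c v * v ^ k))"
      by (rule sum.cong) (auto simp: algebra_simps)
    also have "\<dots> = (\<Sum>v\<in>S. c v * v ^ Suc k) - a * (\<Sum>v\<in>S. c v * v ^ k)"
      by (simp add: sum_subtractf sum_distrib_left)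
    also have "\<dots> = 0"
      by (simp only: sums k zero_less_Suc) (simp add: algebra_simps)
    finally show "(\<Sum>v\<in>S. c v * (v - a) * v ^ k) = 0" .
  qed
  then have "\<forall>v\<in>S. c v * (v - a) = 0"
    using insert.IH[of "\<lambda>v. c v * (v - a)"] insert.prems by simp
  then have cS: "\<forall>v\<in>S. c v = 0"
    using insert.hyps(2) by fastforce
  then have "c a * a = 0" using sums[of 1] by simp
  then show ?case using cS insert.prems by simp
qed

lemma sum_list_map_eq_sum_count_of_nat:
  fixes f :: "'a \<Rightarrow> 'b::semiring_1"
  shows "sum_list (map f xs) = (\<Sum>x\<in>set xs. of_nat (count_list xs x) * f x)"
proof (induction xs)
  case Nil
  then show ?case by simp
next
  case (Cons x xs)
  have "(\<Sum>v\<in>set (x # xs). of_nat (count_list (x # xs) v) * f v)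
      = (\<Sum>v\<in>insert x (set xs). of_nat (count_list xs v) * f v + (if v = x then f v else 0))"
    by (rule sum.cong) (auto simp: algebra_simps)
  also have "\<dots> = (\<Sum>v\<in>insert x (set xs). of_nat (count_list xs v) * f v) + f x"
    by (simp add: sum.distrib)
  also have "(\<Sum>v\<in>insert x (set xs). of_nat (count_list xs v) * f v)
      = (\<Sum>v\<in>set xs. of_nat (count_list xs v) * f v)"
    by (cases "x \<in> set xs") (auto simp: count_list_0_iff insert_absorb)
  finally show ?case using Cons by (simp add: add.commute)
qed

lemma power_sums_zero_imp_zero:
  fixes es :: "complex list"
  assumes "\<forall>k>0. sum_list (map (\<lambda>x. x ^ k) es) = 0"
  shows "\<forall>x\<in>set es. x = 0"
proof -
  let ?c = "\<lambda>v. of_nat (count_list es v) :: complex"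
  have "\<forall>k>0. (\<Sum>v\<in>set es - {0}. ?c v * v ^ k) = 0"
  proof (intro allI impI)
    fix k :: nat assume k: "k > 0"
    have "(\<Sum>v\<in>set es - {0}. ?c v * v ^ k) = (\<Sum>v\<in>set es. ?c v * v ^ k)"
      using k by (intro sum.mono_neutral_left) auto
    also have "\<dots> = 0"
      using assms k by (simp add: sum_list_map_eq_sum_count_of_nat)
    finally show "(\<Sum>v\<in>set es - {0}. ?c v * v ^ k) = 0" .
  qed
  then have "\<forall>v\<in>set es - {0}. ?c v = 0"
    by (intro power_sums_zero_imp_weights_zero) auto
  then show ?thesis by (auto simp: count_list_0_iff)
qed

definition mat_trace :: "'a::comm_ring_1 Matrix.mat \<Rightarrow> 'a" where
  "mat_trace A = (\<Sum>i<dim_row A. A $$ (i,i))"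

lemma mat_trace_mult_commute:
  assumes "A \<in> carrier_mat n m" "B \<in> carrier_mat m n"
  shows "mat_trace (A * B) = mat_trace (B * A)"
proof -
  have "mat_trace (A * B) = (\<Sum>i<n. \<Sum>k<m. A $$ (i,k) * B $$ (k,i))"
    using assms by (simp add: mat_trace_def scalar_prod_def atLeast0LessThan)
  also have "\<dots> = (\<Sum>k<m. \<Sum>i<n. B $$ (k,i) * A $$ (i,k))"
    by (subst sum.swap) (simp add: mult.commute)
  also have "\<dots> = mat_trace (B * A)"
    using assms by (simp add: mat_trace_def scalar_prod_def atLeast0LessThan)
  finally show ?thesis .
qed

lemma upper_triangular_mult_entry:
  assumes A: "A \<in> carrier_mat n n" and B: "B \<in> carrier_mat n n"
    and uA: "upper_triangular A" and uB: "upper_triangular B"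
    and ij: "j \<le> i" "i < n"
  shows "(A * B) $$ (i,j) = (if i = j then A $$ (i,i) * B $$ (i,i) else 0)"
proof -
  have vanish: "A $$ (i,k) * B $$ (k,j) = 0" if k: "k < n" "k \<noteq> i \<or> k \<noteq> j" for k
  proof (cases "k < i")
    case True
    then show ?thesis using ij A uA by (simp add: upper_triangularD)
  next
    case False
    then have "j < k" using k ij by auto
    then show ?thesis using k B uB by (simp add: upper_triangularD)
  qed
  have "(A * B) $$ (i,j) = (\<Sum>k<n. A $$ (i,k) * B $$ (k,j))"
    using A B ij by (simp add: scalar_prod_def atLeast0LessThan)
  also have "\<dots> = (if i = j then A $$ (i,i) * B $$ (i,i) else 0)"
    using ij vanish by (auto intro: sum_eq_single sum.neutral)
  finally show ?thesis .
qed

lemma upper_triangular_pow: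
  assumes B: "B \<in> carrier_mat n n" and uB: "upper_triangular B"
  shows "upper_triangular (B ^\<^sub>m k) \<and> (\<forall>i<n. (B ^\<^sub>m k) $$ (i,i) = (B $$ (i,i)) ^ k)"
proof (induction k)
  case 0
  then show ?case using B by auto
next
  case (Suc k)
  have Bk: "B ^\<^sub>m k \<in> carrier_mat n n" using B by simp
  show ?case
    using upper_triangular_mult_entry[OF Bk B _ uB] Suc B
    by (auto simp: power_Suc2 simp del: power_Suc intro!: upper_triangularI)
qed

lemma strictly_upper_triangular_pow:
  assumes B: "B \<in> carrier_mat n n" and uB: "upper_triangular B"
    and diag: "\<forall>i<n. B $$ (i,i) = 0"
  shows "\<forall>i<n. \<forall>j<n. j < i + k \<longrightarrow> (B ^\<^sub>m k) $$ (i,j) = 0"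
proof (induction k)
  case 0
  then show ?case using B by auto
next
  case (Suc k)
  show ?case
  proof (intro allI impI)
    fix i j assume i: "i < n" and j: "j < n" and ji: "j < i + Suc k"
    have Bk: "B ^\<^sub>m k \<in> carrier_mat n n" using B by simp
    have vanish: "(B ^\<^sub>m k) $$ (i,l) * B $$ (l,j) = 0" if l: "l < n" for l
    proof (cases "l < i + k")
      case True
      then show ?thesis using Suc i l by auto
    next
      case False
      then have "j \<le> l" using ji by auto
      then have "B $$ (l,j) = 0" using uB B diag l j by (cases "j = l") auto
      then show ?thesis by simp
    qed
    have "(B ^\<^sub>m Suc k) $$ (i,j) = (\<Sum>l<n. (B ^\<^sub>m k) $$ (i,l) * B $$ (l,j))"
      using Bk B i j by (simp add: scalar_prod_def atLeast0LessThan)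
    also have "\<dots> = 0" using vanish by simp
    finally show "(B ^\<^sub>m Suc k) $$ (i,j) = 0" .
  qed
qed

text \<open>Triangularise A (Schur): the power sums of the eigenvalues vanish, hence so do the
  eigenvalues.\<close>
lemma pow_dim_eq_zero_if_traces_zero:
  fixes A :: "complex Matrix.mat"
  assumes A: "A \<in> carrier_mat n n"
    and traces: "\<forall>k>0. mat_trace (A ^\<^sub>m k) = 0"
  shows "A ^\<^sub>m n = 0\<^sub>m n n"
proof -
  obtain es where es: "char_poly A = (\<Prod>a\<leftarrow>es. [:- a, 1:])"
    using char_poly_factorized[OF A] by blast
  obtain B P Q where sd: "schur_decomposition A es = (B,P,Q)"
    by (cases "schur_decomposition A es") auto
  from schur_decomposition[OF A es sd]
  have sim: "similar_mat_wit A B P Q" and uB: "upper_triangular B" and diag: "diag_mat B = es"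
    by auto
  from sim A have B: "B \<in> carrier_mat n n" and P: "P \<in> carrier_mat n n"
    and Q: "Q \<in> carrier_mat n n" and QP: "Q * P = 1\<^sub>m n"
    unfolding similar_mat_wit_def Let_def by auto
  have pow_sim: "A ^\<^sub>m k = P * (B ^\<^sub>m k) * Q" for k
    using similar_mat_wit_pow_id[OF sim] .
  have trace_pow: "mat_trace (B ^\<^sub>m k) = mat_trace (A ^\<^sub>m k)" for k
  proof -
    have Bk: "B ^\<^sub>m k \<in> carrier_mat n n" using B by simp
    have "mat_trace (A ^\<^sub>m k) = mat_trace (Q * (P * (B ^\<^sub>m k)))"
      using pow_sim mat_trace_mult_commute[of "P * (B ^\<^sub>m k)" n n Q] P Q Bk by simp
    also have "Q * (P * (B ^\<^sub>m k)) = B ^\<^sub>m k"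
      using P Q Bk QP by (simp add: assoc_mult_mat[symmetric] left_mult_one_mat)
    finally show ?thesis by simp
  qed
  have "\<forall>k>0. sum_list (map (\<lambda>x. x ^ k) es) = 0"
  proof (intro allI impI)
    fix k :: nat assume k: "k > 0"
    have "sum_list (map (\<lambda>x. x ^ k) es) = (\<Sum>i<n. (B $$ (i,i)) ^ k)"
      using diag[symmetric] B by (simp add: diag_mat_def sum_list_sum_nth atLeast0LessThan)
    also have "\<dots> = mat_trace (B ^\<^sub>m k)"
      using upper_triangular_pow[OF B uB, of k] B by (simp add: mat_trace_def)
    finally show "sum_list (map (\<lambda>x. x ^ k) es) = 0" using trace_pow traces k by simp
  qed
  then have "\<forall>x\<in>set es. x = 0" by (rule power_sums_zero_imp_zero)
  then have "\<forall>i<n. B $$ (i,i) = 0"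
    using diag[symmetric] B by (auto simp: diag_mat_def)
  then have "B ^\<^sub>m n = 0\<^sub>m n n"
    using strictly_upper_triangular_pow[OF B uB, of n] B by (intro eq_matI) auto
  then show ?thesis using pow_sim[of n] P Q by simp
qed

section \<open>The quadratic form Q and the Lie algebra so(2,n)\<close>

type_synonym vec = "nat \<Rightarrow> real"

declare sum.atMost_Suc[simp del]

definition vsupported :: "nat \<Rightarrow> vec \<Rightarrow> bool" where
  "vsupported n u \<longleftrightarrow> (\<forall>i. n + 1 < i \<longrightarrow> u i = 0)"

definition qform :: "nat \<Rightarrow> vec \<Rightarrow> vec \<Rightarrow> real" where
  "qform n u v = u 0 * v (n+1) + u (n+1) * v 0 + mink n u v"

definition e0 :: vec where
  "e0 = (\<lambda>i. if i = 0 then 1 else 0)"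

definition e_last :: "nat \<Rightarrow> vec" where
  "e_last n = (\<lambda>i. if i = n + 1 then 1 else 0)"

definition unit_vec :: "nat \<Rightarrow> vec" where
  "unit_vec j = (\<lambda>i. if i = j then 1 else 0)"

definition mink_proj :: "nat \<Rightarrow> vec \<Rightarrow> vec" where
  "mink_proj n u = (\<lambda>i. if 1 \<le> i \<and> i \<le> n then u i else 0)"

lemma mvec_add: "mvec n A (\<lambda>i. u i + v i) = (\<lambda>i. mvec n A u i + mvec n A v i)"
  by (auto simp: mvec_def sum.distrib algebra_simps)

lemma mvec_scale: "mvec n A (\<lambda>i. c * u i) = (\<lambda>i. c * mvec n A u i)"
  by (auto simp: mvec_def sum_distrib_left algebra_simps)

lemma mvec_lincomb: "mvec n A (\<lambda>i. a * u i + b * v i) = (\<lambda>i. a * mvec n A u i + b * mvec n A v i)"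
  by (auto simp: mvec_def sum.distrib sum_distrib_left algebra_simps)

lemma vsupported_mvec: "vsupported n (mvec n A u)"
  by (auto simp: vsupported_def mvec_def)

lemma mvec_cong: "(\<And>i. i \<le> n + 1 \<Longrightarrow> u i = v i) \<Longrightarrow> mvec n A u = mvec n A v"
  by (auto simp: mvec_def intro!: sum.cong)

lemma mvec_mmul: "mvec n (mmul n A B) u = mvec n A (mvec n B u)"
proof
  fix i show "mvec n (mmul n A B) u i = mvec n A (mvec n B u) i"
  proof (cases "i \<le> n + 1")
    case True
    have "mvec n (mmul n A B) u i = (\<Sum>k\<le>n+1. (\<Sum>l\<le>n+1. A i l * B l k) * u k)"
      using True by (auto simp: mvec_def mmul_def intro!: sum.cong)
    also have "\<dots> = (\<Sum>k\<le>n+1. \<Sum>l\<le>n+1. A i l * B l k * u k)"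
      by (simp only: sum_distrib_right)
    also have "\<dots> = (\<Sum>l\<le>n+1. \<Sum>k\<le>n+1. A i l * B l k * u k)"
      by (rule sum.swap)
    also have "\<dots> = (\<Sum>l\<le>n+1. A i l * (\<Sum>k\<le>n+1. B l k * u k))"
      by (simp only: sum_distrib_left mult.assoc)
    also have "\<dots> = mvec n A (mvec n B u) i"
      using True by (auto simp: mvec_def intro!: sum.cong)
    finally show ?thesis .
  qed (simp add: mvec_def)
qed

lemma mmul_assoc: "mmul n (mmul n A B) C = mmul n A (mmul n B C)"
proof (intro ext)
  fix i j show "mmul n (mmul n A B) C i j = mmul n A (mmul n B C) i j"
  proof (cases "i \<le> n + 1 \<and> j \<le> n + 1")
    case True
    have "mmul n (mmul n A B) C i j = (\<Sum>k\<le>n+1. (\<Sum>l\<le>n+1. A i l * B l k) * C k j)"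
      using True by (auto simp: mmul_def intro!: sum.cong)
    also have "\<dots> = (\<Sum>k\<le>n+1. \<Sum>l\<le>n+1. A i l * B l k * C k j)"
      by (simp only: sum_distrib_right)
    also have "\<dots> = (\<Sum>l\<le>n+1. \<Sum>k\<le>n+1. A i l * B l k * C k j)"
      by (rule sum.swap)
    also have "\<dots> = (\<Sum>l\<le>n+1. A i l * (\<Sum>k\<le>n+1. B l k * C k j))"
      by (simp only: sum_distrib_left mult.assoc)
    also have "\<dots> = mmul n A (mmul n B C) i j"
      using True by (auto simp: mmul_def intro!: sum.cong)
    finally show ?thesis .
  qed (auto simp: mmul_def)
qed

lemma mvec_bracket: "mvec n (bracket n X Y) u = (\<lambda>i. mvec n X (mvec n Y u) i - mvec n Y (mvec n X u) i)"
proof -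
  have "mvec n (bracket n X Y) u = (\<lambda>i. mvec n (mmul n X Y) u i - mvec n (mmul n Y X) u i)"
    by (auto simp: mvec_def bracket_def sum_subtractf left_diff_distrib)
  then show ?thesis by (simp add: mvec_mmul)
qed

definition dual_index :: "nat \<Rightarrow> nat \<Rightarrow> nat" where
  "dual_index n i = (if i = 0 then n + 1 else if i = n + 1 then 0 else if i = 1 then n else if i = n then 1 else i)"

lemma Jm_dual_index: "3 \<le> n \<Longrightarrow> i \<le> n + 1 \<Longrightarrow> j \<le> n + 1 \<Longrightarrow> Jm n i j = (if j = dual_index n i then 1 else 0)"
  by (auto simp: Jm_def dual_index_def)

lemma dual_index_le: "3 \<le> n \<Longrightarrow> i \<le> n + 1 \<Longrightarrow> dual_index n i \<le> n + 1"
  by (auto simp: dual_index_def)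

lemma Jm_row_sum: "3 \<le> n \<Longrightarrow> i \<le> n + 1 \<Longrightarrow> (\<Sum>j\<le>n+1. Jm n i j * v j) = v (dual_index n i)"
proof -
  assume n: "3 \<le> n" and i: "i \<le> n + 1"
  have "(\<Sum>j\<le>n+1. Jm n i j * v j) = Jm n i (dual_index n i) * v (dual_index n i)"
    by (rule sum_eq_single) (use n i dual_index_le[OF n i] Jm_dual_index[OF n i] in auto)
  then show ?thesis using Jm_dual_index[OF n i dual_index_le[OF n i]] by simp
qed

lemma sum_split_mink_indices:
  fixes n :: nat
  assumes n: "3 \<le> n"
  shows "(\<Sum>i\<le>n+1. g i) = g 0 + g 1 + g n + g (n+1) + (\<Sum>i\<in>{2..n-1}. g i)"
proof -
  have e: "{..n+1} = insert 0 (insert 1 (insert n (insert (n+1) {2..n-1})))"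
    using n by auto
  show ?thesis unfolding e using n by (simp add: add.assoc)
qed

lemma qform_eq_Jm_sum:
  assumes n: "3 \<le> n"
  shows "qform n u v = (\<Sum>i\<le>n+1. u i * (\<Sum>j\<le>n+1. Jm n i j * v j))"
proof -
  have "(\<Sum>i\<le>n+1. u i * (\<Sum>j\<le>n+1. Jm n i j * v j)) = (\<Sum>i\<le>n+1. u i * v (dual_index n i))"
    by (rule sum.cong) (use n Jm_row_sum in auto)
  also have "\<dots> = u 0 * v (n+1) + u 1 * v n + u n * v 1 + u (n+1) * v 0 + (\<Sum>i\<in>{2..n-1}. u i * v i)"
  proof -
    have "(\<Sum>i\<in>{2..n-1}. u i * v (dual_index n i)) = (\<Sum>i\<in>{2..n-1}. u i * v i)"
      by (rule sum.cong) (auto simp: dual_index_def)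
    then show ?thesis using sum_split_mink_indices[OF n, of "\<lambda>i. u i * v (dual_index n i)"] n by (simp add: dual_index_def)
  qed
  finally show ?thesis by (simp add: qform_def mink_def)
qed

lemma mink_sym: "mink n u v = mink n v u"
  by (simp add: mink_def algebra_simps)

lemma mink_lincomb: "mink n (\<lambda>i. a * u i + b * v i) w = a * mink n u w + b * mink n v w"
  by (simp add: mink_def algebra_simps sum.distrib sum_distrib_left)

lemma mink_scale: "mink n (\<lambda>i. a * u i) w = a * mink n u w"
  by (simp add: mink_def algebra_simps sum_distrib_left)

lemma mink_scale_right: "mink n w (\<lambda>i. a * u i) = a * mink n w u"
  by (simp add: mink_def algebra_simps sum_distrib_left)

lemma mink_add_right: "mink n w (\<lambda>i. u i + v i) = mink n w u + mink n w v"
  by (simp add: mink_def algebra_simps sum.distrib)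

lemma mink_diff: "mink n (\<lambda>i. u i - v i) w = mink n u w - mink n v w"
  by (simp add: mink_def algebra_simps sum_subtractf)

lemma mink_diff_right: "mink n w (\<lambda>i. u i - v i) = mink n w u - mink n w v"
  by (simp add: mink_def algebra_simps sum_subtractf)

lemma mink_zero: "mink n (\<lambda>i. 0) w = 0" "mink n w (\<lambda>i. 0) = 0"
  by (simp_all add: mink_def)

lemma mink_cong: "3 \<le> n \<Longrightarrow> (\<And>i. 1 \<le> i \<Longrightarrow> i \<le> n \<Longrightarrow> u i = u' i) \<Longrightarrow> mink n u w = mink n u' w"
  by (auto simp: mink_def intro!: sum.cong)

lemma mink_mink_proj: "3 \<le> n \<Longrightarrow> mink n (mink_proj n u) w = mink n u w"
  by (rule mink_cong) (auto simp: mink_proj_def)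

lemma mink_mink_proj_right: "3 \<le> n \<Longrightarrow> mink n w (mink_proj n u) = mink n w u"
  using mink_mink_proj[of n u w] by (simp add: mink_sym)

lemma mink_e0: "3 \<le> n \<Longrightarrow> mink n e0 w = 0"
  by (subst mink_cong[of n e0 "\<lambda>i. 0"]) (auto simp: e0_def mink_zero)

lemma mink_e_last: "3 \<le> n \<Longrightarrow> mink n (e_last n) w = 0"
  by (subst mink_cong[of n "e_last n" "\<lambda>i. 0"]) (auto simp: e_last_def mink_zero)

lemma mink_e0_right: "3 \<le> n \<Longrightarrow> mink n w e0 = 0"
  using mink_e0 mink_sym by metis

lemma mink_e_last_right: "3 \<le> n \<Longrightarrow> mink n w (e_last n) = 0"
  using mink_e_last mink_sym by metis

lemma qform_sym: "qform n u v = qform n v u"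
  by (simp add: qform_def mink_sym algebra_simps)

lemma qform_lincomb: "qform n (\<lambda>i. a * u i + b * v i) w = a * qform n u w + b * qform n v w"
  by (simp add: qform_def mink_lincomb algebra_simps)

lemma qform_diff: "qform n (\<lambda>i. a * u i - b * v i) w = a * qform n u w - b * qform n v w"
  using qform_lincomb[of n a u "-b" v w] by simp

lemma qform_scale: "qform n (\<lambda>i. a * u i) w = a * qform n u w"
  using qform_lincomb[of n a u 0 u w] by simp

lemma qform_e0: "3 \<le> n \<Longrightarrow> qform n e0 v = v (n+1)"
  by (simp add: qform_def mink_e0) (simp add: e0_def)

lemma qform_e0_right: "3 \<le> n \<Longrightarrow> qform n v e0 = v (n+1)"
  using qform_e0 qform_sym by metis

lemma qform_e_last: "3 \<le> n \<Longrightarrow> qform n (e_last n) v = v 0"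
  by (simp add: qform_def mink_e_last) (simp add: e_last_def)

lemma qform_e_last_right: "3 \<le> n \<Longrightarrow> qform n v (e_last n) = v 0"
  using qform_e_last qform_sym by metis

lemma qform_minkvec: "minkvec n w \<Longrightarrow> qform n w v = mink n w v" "minkvec n w \<Longrightarrow> qform n v w = mink n v w"
  by (auto simp: qform_def minkvec_def)

lemma minkvec_mink_proj: "minkvec n (mink_proj n u)"
  by (auto simp: minkvec_def mink_proj_def)

lemma vsupported_minkvec: "minkvec n w \<Longrightarrow> vsupported n w"
  by (auto simp: minkvec_def vsupported_def)

lemma vsupported_e0: "vsupported n e0"
  by (auto simp: vsupported_def e0_def)

lemma sum_mult_sum_swap:
  fixes a :: "'i \<Rightarrow> 'k \<Rightarrow> real"
  shows "(\<Sum>i\<in>I. (\<Sum>k\<in>K. a i k * u k) * c i) = (\<Sum>k\<in>K. u k * (\<Sum>i\<in>I. a i k * c i))"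
proof -
  have "(\<Sum>i\<in>I. (\<Sum>k\<in>K. a i k * u k) * c i) = (\<Sum>i\<in>I. \<Sum>k\<in>K. a i k * u k * c i)"
    by (simp only: sum_distrib_right)
  also have "\<dots> = (\<Sum>i\<in>I. \<Sum>k\<in>K. u k * (a i k * c i))"
    by (intro sum.cong refl) (simp add: mult_ac)
  also have "\<dots> = (\<Sum>k\<in>K. \<Sum>i\<in>I. u k * (a i k * c i))" by (rule sum.swap)
  also have "\<dots> = (\<Sum>k\<in>K. u k * (\<Sum>i\<in>I. a i k * c i))" by (simp only: sum_distrib_left)
  finally show ?thesis .
qed

lemma qform_mvec_left:
  assumes n: "3 \<le> n"
  shows "qform n (mvec n A u) v = (\<Sum>k\<le>n+1. u k * (\<Sum>j\<le>n+1. (\<Sum>i\<le>n+1. A i k * Jm n i j) * v j))"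
proof -
  have "qform n (mvec n A u) v = (\<Sum>i\<le>n+1. (\<Sum>k\<le>n+1. A i k * u k) * (\<Sum>j\<le>n+1. Jm n i j * v j))"
    unfolding qform_eq_Jm_sum[OF n] by (rule sum.cong) (auto simp: mvec_def)
  also have "\<dots> = (\<Sum>k\<le>n+1. u k * (\<Sum>i\<le>n+1. A i k * (\<Sum>j\<le>n+1. Jm n i j * v j)))"
    by (rule sum_mult_sum_swap)
  also have "\<dots> = (\<Sum>k\<le>n+1. u k * (\<Sum>j\<le>n+1. (\<Sum>i\<le>n+1. A i k * Jm n i j) * v j))"
  proof (rule sum.cong[OF refl])
    fix k
    have "(\<Sum>i\<le>n+1. A i k * (\<Sum>j\<le>n+1. Jm n i j * v j)) = (\<Sum>i\<le>n+1. \<Sum>j\<le>n+1. A i k * Jm n i j * v j)"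
      by (simp only: sum_distrib_left mult.assoc)
    also have "\<dots> = (\<Sum>j\<le>n+1. \<Sum>i\<le>n+1. A i k * Jm n i j * v j)" by (rule sum.swap)
    also have "\<dots> = (\<Sum>j\<le>n+1. (\<Sum>i\<le>n+1. A i k * Jm n i j) * v j)" by (simp only: sum_distrib_right)
    finally show "u k * (\<Sum>i\<le>n+1. A i k * (\<Sum>j\<le>n+1. Jm n i j * v j)) = u k * (\<Sum>j\<le>n+1. (\<Sum>i\<le>n+1. A i k * Jm n i j) * v j)"
      by simp
  qed
  finally show ?thesis .
qed

lemma qform_mvec_right:
  assumes n: "3 \<le> n"
  shows "qform n u (mvec n A v) = (\<Sum>k\<le>n+1. u k * (\<Sum>j\<le>n+1. (\<Sum>i\<le>n+1. Jm n k i * A i j) * v j))"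
proof -
  have "qform n u (mvec n A v) = (\<Sum>k\<le>n+1. u k * (\<Sum>i\<le>n+1. Jm n k i * (\<Sum>j\<le>n+1. A i j * v j)))"
    unfolding qform_eq_Jm_sum[OF n] by (intro sum.cong refl arg_cong2[where f="(*)"]) (auto simp: mvec_def)
  also have "\<dots> = (\<Sum>k\<le>n+1. u k * (\<Sum>j\<le>n+1. (\<Sum>i\<le>n+1. Jm n k i * A i j) * v j))"
  proof (rule sum.cong[OF refl])
    fix k
    have "(\<Sum>i\<le>n+1. Jm n k i * (\<Sum>j\<le>n+1. A i j * v j)) = (\<Sum>i\<le>n+1. \<Sum>j\<le>n+1. Jm n k i * A i j * v j)"
      by (simp only: sum_distrib_left mult.assoc)
    also have "\<dots> = (\<Sum>j\<le>n+1. \<Sum>i\<le>n+1. Jm n k i * A i j * v j)" by (rule sum.swap)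
    also have "\<dots> = (\<Sum>j\<le>n+1. (\<Sum>i\<le>n+1. Jm n k i * A i j) * v j)" by (simp only: sum_distrib_right)
    finally show "u k * (\<Sum>i\<le>n+1. Jm n k i * (\<Sum>j\<le>n+1. A i j * v j)) = u k * (\<Sum>j\<le>n+1. (\<Sum>i\<le>n+1. Jm n k i * A i j) * v j)"
      by simp
  qed
  finally show ?thesis .
qed

lemma so2n_skew:
  assumes n: "3 \<le> n" and A: "A \<in> so2n n"
  shows "qform n (mvec n A u) v = - qform n u (mvec n A v)"
proof -
  have c: "(\<Sum>i\<le>n+1. A i k * Jm n i j) + (\<Sum>i\<le>n+1. Jm n k i * A i j) = 0"
    if "k \<le> n + 1" "j \<le> n + 1" for k j
  proof -
    have "mmul n (mtransp A) (Jm n) k j + mmul n (Jm n) A k j = 0" using A by (auto simp: so2n_def)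
    then show ?thesis using that by (simp add: mmul_def mtransp_def)
  qed
  have ck: "(\<Sum>j\<le>n+1. (\<Sum>i\<le>n+1. A i k * Jm n i j) * v j) + (\<Sum>j\<le>n+1. (\<Sum>i\<le>n+1. Jm n k i * A i j) * v j) = 0"
    if k: "k \<le> n + 1" for k
  proof -
    have "(\<Sum>j\<le>n+1. (\<Sum>i\<le>n+1. A i k * Jm n i j) * v j) + (\<Sum>j\<le>n+1. (\<Sum>i\<le>n+1. Jm n k i * A i j) * v j)
       = (\<Sum>j\<le>n+1. ((\<Sum>i\<le>n+1. A i k * Jm n i j) + (\<Sum>i\<le>n+1. Jm n k i * A i j)) * v j)"
      by (subst sum.distrib[symmetric]) (simp only: distrib_right)
    also have "\<dots> = 0" using c k by (intro sum.neutral) auto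
    finally show ?thesis .
  qed
  have "qform n (mvec n A u) v + qform n u (mvec n A v) =
        (\<Sum>k\<le>n+1. u k * ((\<Sum>j\<le>n+1. (\<Sum>i\<le>n+1. A i k * Jm n i j) * v j) + (\<Sum>j\<le>n+1. (\<Sum>i\<le>n+1. Jm n k i * A i j) * v j)))"
    unfolding qform_mvec_left[OF n] qform_mvec_right[OF n]
    by (subst sum.distrib[symmetric]) (simp only: distrib_left)
  also have "\<dots> = 0" using ck by (intro sum.neutral) auto
  finally show ?thesis by simp
qed

lemma mvec_unit_vec: "i \<le> n + 1 \<Longrightarrow> j \<le> n + 1 \<Longrightarrow> mvec n A (unit_vec j) i = A i j"
proof -
  assume i: "i \<le> n + 1" and j: "j \<le> n + 1"
  have "mvec n A (unit_vec j) i = (\<Sum>k\<le>n+1. A i k * unit_vec j k)" using i by (simp add: mvec_def)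
  also have "\<dots> = A i j * unit_vec j j" by (rule sum_eq_single) (use j in \<open>auto simp: unit_vec_def\<close>)
  finally show ?thesis by (simp add: unit_vec_def)
qed

lemma vsupported_unit_vec: "j \<le> n + 1 \<Longrightarrow> vsupported n (unit_vec j)"
  by (auto simp: vsupported_def unit_vec_def)

lemma mat_eq_if_columns_eq:
  assumes "supported n A" "supported n B" "\<And>j. j \<le> n + 1 \<Longrightarrow> mvec n A (unit_vec j) = mvec n B (unit_vec j)"
  shows "A = B"
proof (intro ext)
  fix i j show "A i j = B i j"
  proof (cases "i \<le> n + 1 \<and> j \<le> n + 1")
    case True
    then show ?thesis using assms(3)[of j] mvec_unit_vec[of i n j A] mvec_unit_vec[of i n j B] by auto
  next
    case False then show ?thesis using assms(1,2) by (auto simp: supported_def)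
  qed
qed

lemma Jm_sums_eq_qform:
  assumes n: "3 \<le> n" and that: "k \<le> n + 1" "j \<le> n + 1"
  shows "(\<Sum>i\<le>n+1. A i k * Jm n i j) = qform n (mvec n A (unit_vec k)) (unit_vec j)"
    and "(\<Sum>i\<le>n+1. Jm n k i * A i j) = qform n (unit_vec k) (mvec n A (unit_vec j))"
proof -
  have u: "(\<Sum>l\<le>n+1. unit_vec k l * g l) = g k" for g :: "nat \<Rightarrow> real"
    by (subst sum_eq_single[of _ k]) (use that in \<open>auto simp: unit_vec_def\<close>)
  have u2: "(\<Sum>l\<le>n+1. g l * unit_vec j l) = g j" for g :: "nat \<Rightarrow> real"
    by (subst sum_eq_single[of _ j]) (use that in \<open>auto simp: unit_vec_def\<close>)
  show "(\<Sum>i\<le>n+1. A i k * Jm n i j) = qform n (mvec n A (unit_vec k)) (unit_vec j)"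
    unfolding qform_mvec_left[OF n] u u2 ..
  show "(\<Sum>i\<le>n+1. Jm n k i * A i j) = qform n (unit_vec k) (mvec n A (unit_vec j))"
    unfolding qform_mvec_right[OF n] u u2 ..
qed

lemma so2nI:
  assumes n: "3 \<le> n" and sA: "supported n A"
    and sk: "\<And>u v. vsupported n u \<Longrightarrow> vsupported n v \<Longrightarrow> qform n (mvec n A u) v = - qform n u (mvec n A v)"
  shows "A \<in> so2n n"
  unfolding so2n_def
proof (intro CollectI conjI allI sA)
  fix k j
  show "mmul n (mtransp A) (Jm n) k j + mmul n (Jm n) A k j = 0"
  proof (cases "k \<le> n + 1 \<and> j \<le> n + 1")
    case True
    then have "mmul n (mtransp A) (Jm n) k j + mmul n (Jm n) A k j
        = qform n (mvec n A (unit_vec k)) (unit_vec j) + qform n (unit_vec k) (mvec n A (unit_vec j))"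
      using Jm_sums_eq_qform[OF n, of k j A] True by (simp add: mmul_def mtransp_def)
    also have "\<dots> = 0" using sk[of "unit_vec k" "unit_vec j"] True vsupported_unit_vec by auto
    finally show ?thesis .
  qed (auto simp: mmul_def)
qed

lemma qform_unit_vec_expansion:
  assumes n: "3 \<le> n"
  shows "qform n r u = (\<Sum>j\<le>n+1. qform n r (unit_vec j) * u j)"
proof -
  have bu: "qform n r (unit_vec j) = (\<Sum>i\<le>n+1. r i * Jm n i j)" if j: "j \<le> n + 1" for j
  proof -
    have "qform n r (unit_vec j) = (\<Sum>i\<le>n+1. r i * (\<Sum>k\<le>n+1. Jm n i k * unit_vec j k))" by (rule qform_eq_Jm_sum[OF n])
    also have "\<dots> = (\<Sum>i\<le>n+1. r i * Jm n i j)"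
    proof (rule sum.cong[OF refl])
      fix i
      have "(\<Sum>k\<le>n+1. Jm n i k * unit_vec j k) = Jm n i j * unit_vec j j"
        by (rule sum_eq_single) (use j in \<open>auto simp: unit_vec_def\<close>)
      then show "r i * (\<Sum>k\<le>n+1. Jm n i k * unit_vec j k) = r i * Jm n i j" by (simp add: unit_vec_def)
    qed
    finally show ?thesis .
  qed
  have "qform n r u = (\<Sum>i\<le>n+1. (\<Sum>j\<le>n+1. Jm n i j * u j) * r i)"
    by (simp add: qform_eq_Jm_sum[OF n] mult.commute)
  also have "\<dots> = (\<Sum>j\<le>n+1. u j * (\<Sum>i\<le>n+1. Jm n i j * r i))" by (rule sum_mult_sum_swap)
  also have "\<dots> = (\<Sum>j\<le>n+1. qform n r (unit_vec j) * u j)"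
    by (rule sum.cong[OF refl]) (simp add: bu mult.commute)
  finally show ?thesis .
qed

lemma mmul_unit_vec: "i \<le> n + 1 \<Longrightarrow> j \<le> n + 1 \<Longrightarrow> mmul n A B i j = mvec n A (mvec n B (unit_vec j)) i"
  by (metis mvec_mmul mvec_unit_vec)

lemma column_eq_mvec_unit_vec:
  assumes "supported n g" "j \<le> n + 1"
  shows "(\<lambda>a. g a j) = mvec n g (unit_vec j)"
proof
  fix a show "g a j = mvec n g (unit_vec j) a"
    using assms mvec_unit_vec[of a n j g] by (cases "a \<le> n + 1") (auto simp: supported_def mvec_def)
qed

lemma Jm_eq_qform_unit_vec:
  assumes n: "3 \<le> n" "i \<le> n + 1" "j \<le> n + 1"
  shows "Jm n i j = qform n (unit_vec i) (unit_vec j)"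
proof -
  have "qform n (unit_vec i) (unit_vec j) = (\<Sum>a\<le>n+1. unit_vec i a * (\<Sum>b\<le>n+1. Jm n a b * unit_vec j b))" by (rule qform_eq_Jm_sum[OF n(1)])
  also have "\<dots> = unit_vec i i * (\<Sum>b\<le>n+1. Jm n i b * unit_vec j b)"
    by (rule sum_eq_single) (use n in \<open>auto simp: unit_vec_def\<close>)
  also have "(\<Sum>b\<le>n+1. Jm n i b * unit_vec j b) = Jm n i j * unit_vec j j"
    by (rule sum_eq_single) (use n in \<open>auto simp: unit_vec_def\<close>)
  finally show ?thesis by (simp add: unit_vec_def)
qed

lemma Jm_outside: "3 \<le> n \<Longrightarrow> \<not> (i \<le> n + 1 \<and> j \<le> n + 1) \<Longrightarrow> Jm n i j = 0"
  by (auto simp: Jm_def)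

lemma O2nI:
  assumes n: "3 \<le> n" and sg: "supported n g"
    and pres: "\<And>u v. vsupported n u \<Longrightarrow> vsupported n v \<Longrightarrow> qform n (mvec n g u) (mvec n g v) = qform n u v"
  shows "g \<in> O2n n"
  unfolding O2n_def
proof (intro CollectI conjI sg ext)
  fix i j
  show "mmul n (mtransp g) (mmul n (Jm n) g) i j = Jm n i j"
  proof (cases "i \<le> n + 1 \<and> j \<le> n + 1")
    case True
    have "mmul n (mtransp g) (mmul n (Jm n) g) i j = (\<Sum>a\<le>n+1. g a i * (\<Sum>b\<le>n+1. Jm n a b * g b j))"
      using True by (auto simp: mmul_def mtransp_def intro!: sum.cong)
    also have "\<dots> = qform n (\<lambda>a. g a i) (\<lambda>b. g b j)" by (simp add: qform_eq_Jm_sum[OF n])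
    also have "\<dots> = qform n (mvec n g (unit_vec i)) (mvec n g (unit_vec j))"
      using column_eq_mvec_unit_vec[OF sg] True by simp
    also have "\<dots> = qform n (unit_vec i) (unit_vec j)" using pres vsupported_unit_vec True by simp
    also have "\<dots> = Jm n i j" using Jm_eq_qform_unit_vec[OF n] True by simp
    finally show ?thesis .
  next
    case False then show ?thesis using Jm_outside[OF n] by (auto simp: mmul_def)
  qed
qed

section \<open>Null vectors of Minkowski space\<close>

lemma null_middle_coords_zero:
  assumes n: "3 \<le> n" and d: "d n = 0" and dd: "mink n d d = 0"
  shows "\<forall>i\<in>{2..n-1}. d i = 0"
proof -
  have "(\<Sum>i\<in>{2..n-1}. d i * d i) = 0" using dd d by (simp add: mink_def)
  then have "\<forall>i\<in>{2..n-1}. d i * d i = 0"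
    by (subst (asm) sum_nonneg_eq_0_iff) auto
  then show ?thesis by auto
qed

lemma mink_unit_vec_n: "3 \<le> n \<Longrightarrow> mink n l (unit_vec n) = l 1"
proof -
  assume n: "3 \<le> n"
  have "(\<Sum>i\<in>{2..n-1}. l i * unit_vec n i) = 0" by (intro sum.neutral) (auto simp: unit_vec_def)
  then show ?thesis using n by (simp add: mink_def unit_vec_def)
qed

lemma mink_unit_vec_1: "3 \<le> n \<Longrightarrow> mink n l (unit_vec 1) = l n"
proof -
  assume n: "3 \<le> n"
  have "(\<Sum>i\<in>{2..n-1}. l i * unit_vec 1 i) = 0" by (intro sum.neutral) (auto simp: unit_vec_def)
  then show ?thesis using n by (simp add: mink_def unit_vec_def)
qed

lemma mink_unit_vec_mid: "3 \<le> n \<Longrightarrow> i \<in> {2..n-1} \<Longrightarrow> mink n l (unit_vec i) = l i"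
proof -
  assume n: "3 \<le> n" and i: "i \<in> {2..n-1}"
  have "(\<Sum>j\<in>{2..n-1}. l j * unit_vec i j) = l i * unit_vec i i"
    by (rule sum_eq_single) (use i in \<open>auto simp: unit_vec_def\<close>)
  moreover have "unit_vec i n = 0" "unit_vec i 1 = 0" "unit_vec i i = 1" using i n by (auto simp: unit_vec_def)
  ultimately show ?thesis by (simp add: mink_def)
qed

lemma qform_e1: "3 \<le> n \<Longrightarrow> qform n (unit_vec 1) v = v n"
  using qform_minkvec(1)[of n "unit_vec 1" v] mink_unit_vec_1[of n v]
  by (simp add: mink_sym minkvec_def unit_vec_def)

lemma null_on_e1_line:
  assumes n: "3 \<le> n" and w: "minkvec n w" and wn: "w n = 0" and ww: "mink n w w = 0"
  shows "w = (\<lambda>i. w 1 * unit_vec 1 i)"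
proof
  fix i
  show "w i = w 1 * unit_vec 1 i"
    using null_middle_coords_zero[OF n wn ww] w wn n unfolding minkvec_def unit_vec_def
    by (cases "i = 0 \<or> n < i"; cases "i = 1"; cases "i = n") auto
qed

lemma mink_e1_line: "3 \<le> n \<Longrightarrow> mink n (\<lambda>i. c * unit_vec 1 i) v = c * v n"
  unfolding mink_scale mink_sym[of n "unit_vec 1" v] by (simp only: mink_unit_vec_1)

lemma null_orthogonal_parallel:
  assumes n: "3 \<le> n" and w1: "minkvec n w1" and w2: "minkvec n w2"
    and z1: "mink n w1 w1 = 0" and z2: "mink n w2 w2 = 0" and z12: "mink n w1 w2 = 0"
    and nz: "w1 \<noteq> (\<lambda>_. 0)"
  shows "\<exists>s. w2 = (\<lambda>i. s * w1 i)"
proof (cases "w1 n = 0")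
  case False
  define s where "s = w2 n / w1 n"
  define d where "d = (\<lambda>i. w2 i - s * w1 i)"
  have dW: "minkvec n d" using w1 w2 by (simp add: d_def minkvec_def)
  have dn: "d n = 0" using False by (simp add: d_def s_def)
  have dw1: "mink n d w1 = 0" and dd: "mink n d d = 0"
    unfolding d_def using z1 z2 z12
    by (simp_all add: mink_diff mink_diff_right mink_scale mink_scale_right mink_sym[of n w2 w1])
  obtain c where d_eq: "d = (\<lambda>i. c * unit_vec 1 i)"
    using null_on_e1_line[OF n dW dn dd] by blast
  then have "c * w1 n = 0" using dw1 mink_e1_line[OF n, of c w1] by simp
  then have "d = (\<lambda>_. 0)" using d_eq False by simp
  then show ?thesis by (auto simp: d_def fun_eq_iff)
next
  case True
  obtain c where w1_eq: "w1 = (\<lambda>i. c * unit_vec 1 i)"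
    using null_on_e1_line[OF n w1 True z1] by blast
  then have c: "c \<noteq> 0" using nz by auto
  have "c * w2 n = 0" using z12 mink_e1_line[OF n, of c w2] w1_eq by simp
  then have "w2 n = 0" using c by simp
  obtain c' where "w2 = (\<lambda>i. c' * unit_vec 1 i)"
    using null_on_e1_line[OF n w2 \<open>w2 n = 0\<close> z2] by blast
  then have "w2 = (\<lambda>i. (c' / c) * w1 i)" using c w1_eq by (auto simp: fun_eq_iff)
  then show ?thesis by blast
qed

lemma minkvec_scaled_unit_vec: "1 \<le> i \<Longrightarrow> i \<le> n \<Longrightarrow> minkvec n (\<lambda>j. c * unit_vec i j)"
  by (auto simp: minkvec_def unit_vec_def)

lemma mink_exists_dual:
  assumes n: "3 \<le> n" and m: "minkvec n l" and nz: "l \<noteq> (\<lambda>_. 0)"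
  shows "\<exists>w0. minkvec n w0 \<and> mink n l w0 = 1"
proof -
  obtain i where li: "l i \<noteq> 0" using nz by auto
  have "\<not> (i = 0 \<or> n < i)" using li m unfolding minkvec_def by blast
  then have i: "1 \<le> i" "i \<le> n" by auto
  have key: "\<exists>w0. minkvec n w0 \<and> mink n l w0 = 1" if "mink n l (unit_vec j) \<noteq> 0" "1 \<le> j" "j \<le> n" for j
  proof -
    define c where "c = 1 / mink n l (unit_vec j)"
    have "minkvec n (\<lambda>k. c * unit_vec j k)" using that by (intro minkvec_scaled_unit_vec)
    moreover have "mink n l (\<lambda>k. c * unit_vec j k) = c * mink n l (unit_vec j)" by (rule mink_scale_right)
    moreover have "c * mink n l (unit_vec j) = 1" using that(1) by (simp add: c_def)
    ultimately show ?thesis by metis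
  qed
  consider "i = 1" | "i = n" | "i \<in> {2..n-1}" using i n by force
  then show ?thesis
  proof cases
    case 1
    then show ?thesis using key[of n] li n by (simp add: mink_unit_vec_n)
  next
    case 2
    have "mink n l (unit_vec 1) = l n" by (rule mink_unit_vec_1[OF n])
    then show ?thesis using key[of 1] li n 2 by auto
  next
    case 3
    then show ?thesis using key[of i] li n i by (simp add: mink_unit_vec_mid)
  qed
qed

section \<open>Commutators are nilpotent\<close>

definition mtrace :: "nat \<Rightarrow> mat \<Rightarrow> real" where
  "mtrace n A = (\<Sum>i\<le>n+1. A i i)"

primrec mpow :: "nat \<Rightarrow> mat \<Rightarrow> nat \<Rightarrow> mat" where
  "mpow n A 0 = idm n"
| "mpow n A (Suc k) = mmul n (mpow n A k) A"

lemma supported_mmul: "supported n (mmul n A B)"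
  by (auto simp: supported_def mmul_def)

lemma mmul_idm_left: "supported n A \<Longrightarrow> mmul n (idm n) A = A"
proof (intro ext)
  fix i j assume s: "supported n A"
  show "mmul n (idm n) A i j = A i j"
  proof (cases "i \<le> n + 1 \<and> j \<le> n + 1")
    case True
    have "(\<Sum>k\<le>n+1. idm n i k * A k j) = idm n i i * A i j"
      by (rule sum_eq_single) (use True in \<open>auto simp: idm_def\<close>)
    then show ?thesis using True by (simp add: mmul_def idm_def)
  qed (use s in \<open>auto simp: mmul_def supported_def\<close>)
qed

lemma mmul_idm_right: "supported n A \<Longrightarrow> mmul n A (idm n) = A"
proof (intro ext)
  fix i j assume s: "supported n A"
  show "mmul n A (idm n) i j = A i j"
  proof (cases "i \<le> n + 1 \<and> j \<le> n + 1")
    case True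
    have "(\<Sum>k\<le>n+1. A i k * idm n k j) = A i j * idm n j j"
      by (rule sum_eq_single) (use True in \<open>auto simp: idm_def\<close>)
    then show ?thesis using True by (simp add: mmul_def idm_def)
  qed (use s in \<open>auto simp: mmul_def supported_def\<close>)
qed

lemma mtrace_mmul_commute: "mtrace n (mmul n A B) = mtrace n (mmul n B A)"
proof -
  have "mtrace n (mmul n A B) = (\<Sum>i\<le>n+1. \<Sum>k\<le>n+1. A i k * B k i)"
    by (auto simp: mtrace_def mmul_def intro!: sum.cong)
  also have "\<dots> = (\<Sum>k\<le>n+1. \<Sum>i\<le>n+1. B k i * A i k)"
    by (subst sum.swap) (simp add: mult.commute)
  also have "\<dots> = mtrace n (mmul n B A)"
    by (auto simp: mtrace_def mmul_def intro!: sum.cong)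
  finally show ?thesis .
qed

lemma mmul_diff_right: "mmul n P (\<lambda>i j. A i j - B i j) = (\<lambda>i j. mmul n P A i j - mmul n P B i j)"
  by (rule ext)+ (simp add: mmul_def sum_subtractf right_diff_distrib)

lemma mtrace_diff: "mtrace n (\<lambda>i j. A i j - B i j) = mtrace n A - mtrace n B"
  by (simp add: mtrace_def sum_subtractf)

lemma so2n_supported: "A \<in> so2n n \<Longrightarrow> supported n A"
  by (simp add: so2n_def)

lemma mtrace_pow_commutator_zero:
  assumes sX: "supported n X" and Z: "bracket n X Y = Z" and XZ: "bracket n X Z = (\<lambda>_ _. 0)"
  shows "mtrace n (mpow n Z (Suc k)) = 0"
proof -
  have cXZ: "mmul n X Z = mmul n Z X"
  proof (intro ext)
    fix i j have "bracket n X Z i j = 0" using XZ by simp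
    then show "mmul n X Z i j = mmul n Z X i j" by (simp add: bracket_def)
  qed
  have cP: "mmul n (mpow n Z m) X = mmul n X (mpow n Z m)" for m
  proof (induction m)
    case 0 then show ?case using sX by (simp add: mmul_idm_left mmul_idm_right)
  next
    case (Suc m)
    have "mmul n (mpow n Z (Suc m)) X = mmul n (mpow n Z m) (mmul n Z X)" by (simp add: mmul_assoc)
    also have "\<dots> = mmul n (mmul n (mpow n Z m) X) Z" by (simp add: mmul_assoc cXZ)
    also have "\<dots> = mmul n X (mpow n Z (Suc m))" by (simp add: Suc mmul_assoc)
    finally show ?case .
  qed
  define P where "P = mpow n Z k"
  have "mtrace n (mmul n P (mmul n X Y)) = mtrace n (mmul n P (mmul n Y X))"
  proof -
    have "mtrace n (mmul n P (mmul n X Y)) = mtrace n (mmul n X (mmul n P Y))"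
      using cP[of k] by (simp add: P_def mmul_assoc[symmetric])
    also have "\<dots> = mtrace n (mmul n (mmul n P Y) X)" by (rule mtrace_mmul_commute)
    also have "\<dots> = mtrace n (mmul n P (mmul n Y X))" by (simp add: mmul_assoc)
    finally show ?thesis .
  qed
  moreover have "Z = (\<lambda>i j. mmul n X Y i j - mmul n Y X i j)"
    using Z by (auto simp: bracket_def)
  ultimately have "mtrace n (mmul n P Z) = 0"
    by (simp add: mmul_diff_right mtrace_diff)
  then show ?thesis by (simp add: P_def)
qed

definition to_cmat :: "nat \<Rightarrow> mat \<Rightarrow> complex Matrix.mat" where
  "to_cmat n A = Matrix.mat (n+2) (n+2) (\<lambda>(i,j). complex_of_real (A i j))"

lemma to_cmat_carrier: "to_cmat n A \<in> carrier_mat (n+2) (n+2)"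
  by (simp add: to_cmat_def)

lemma sum_atLeast0LessThan_eq_atMost:
  fixes n :: nat
  shows "(\<Sum>k\<in>{0..<n+2}. f k) = (\<Sum>k\<le>n+1. f k)"
proof -
  have "{0..<n+2} = {..n+1}" by auto
  then show ?thesis by simp
qed

lemma to_cmat_mmul: "to_cmat n (mmul n A B) = to_cmat n A * to_cmat n B"
proof (rule eq_matI)
  fix i j assume i: "i < dim_row (to_cmat n A * to_cmat n B)" and j: "j < dim_col (to_cmat n A * to_cmat n B)"
  then have i': "i \<le> n + 1" and j': "j \<le> n + 1" by (auto simp: to_cmat_def)
  have "(to_cmat n A * to_cmat n B) $$ (i,j) = (\<Sum>k\<in>{0..<n+2}. complex_of_real (A i k) * complex_of_real (B k j))"
    using i j by (simp add: to_cmat_def scalar_prod_def)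
  also have "\<dots> = complex_of_real (\<Sum>k\<le>n+1. A i k * B k j)"
    unfolding sum_atLeast0LessThan_eq_atMost of_real_sum of_real_mult ..
  also have "\<dots> = to_cmat n (mmul n A B) $$ (i,j)"
    using i' j' by (simp add: to_cmat_def mmul_def less_Suc_eq_le)
  finally show "to_cmat n (mmul n A B) $$ (i,j) = (to_cmat n A * to_cmat n B) $$ (i,j)" by simp
qed (auto simp: to_cmat_def)

lemma to_cmat_idm: "to_cmat n (idm n) = 1\<^sub>m (n+2)"
  by (rule eq_matI) (auto simp: to_cmat_def idm_def)

lemma dim_row_to_cmat: "dim_row (to_cmat n A) = n + 2"
  by (simp add: to_cmat_def)

lemma to_cmat_mpow: "to_cmat n (mpow n A k) = to_cmat n A ^\<^sub>m k"
  by (induction k) (simp_all add: to_cmat_idm to_cmat_mmul dim_row_to_cmat)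

lemma mat_trace_to_cmat: "mat_trace (to_cmat n A) = complex_of_real (mtrace n A)"
proof -
  have "mat_trace (to_cmat n A) = (\<Sum>i<n+2. complex_of_real (A i i))" by (simp add: mat_trace_def to_cmat_def)
  also have "\<dots> = complex_of_real (\<Sum>i\<le>n+1. A i i)"
  proof -
    have "{..<n+2} = {..n+1}" by auto
    then show ?thesis by simp
  qed
  finally show ?thesis by (simp add: mtrace_def)
qed

lemma mvec_idm: "vsupported n u \<Longrightarrow> mvec n (idm n) u = u"
proof
  fix i assume u: "vsupported n u"
  show "mvec n (idm n) u i = u i"
  proof (cases "i \<le> n + 1")
    case True
    have "(\<Sum>k\<le>n+1. idm n i k * u k) = idm n i i * u i"
      by (rule sum_eq_single) (use True in \<open>auto simp: idm_def\<close>)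
    then show ?thesis using True by (simp add: mvec_def idm_def)
  qed (use u in \<open>auto simp: mvec_def vsupported_def\<close>)
qed

lemma mvec_mpow: "vsupported n u \<Longrightarrow> mvec n (mpow n A k) u = (mvec n A ^^ k) u"
proof (induction k arbitrary: u)
  case 0 then show ?case by (simp add: mvec_idm)
next
  case (Suc k)
  have "mvec n (mpow n A (Suc k)) u = mvec n (mpow n A k) (mvec n A u)" by (simp add: mvec_mmul)
  also have "\<dots> = (mvec n A ^^ k) (mvec n A u)" using Suc.IH[of "mvec n A u"] vsupported_mvec by blast
  also have "\<dots> = (mvec n A ^^ Suc k) u" by (simp add: funpow_Suc_right del: funpow.simps)
  finally show ?case .
qed

lemma mvec_commutator_nilpotent:
  assumes X: "supported n X"
    and Z: "bracket n X Y = Z" and XZ: "bracket n X Z = (\<lambda>_ _. 0)"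
    and u: "vsupported n u"
  shows "(mvec n Z ^^ (n+2)) u = (\<lambda>_. 0)"
proof -
  have tr: "\<forall>k>0. mat_trace (to_cmat n Z ^\<^sub>m k) = 0"
  proof (intro allI impI)
    fix k :: nat assume "k > 0"
    then obtain k' where k: "k = Suc k'" by (cases k) auto
    have "mtrace n (mpow n Z (Suc k')) = 0"
      by (rule mtrace_pow_commutator_zero[OF X Z XZ])
    then have "mat_trace (to_cmat n (mpow n Z k)) = 0" using k by (simp only: mat_trace_to_cmat) simp
    then show "mat_trace (to_cmat n Z ^\<^sub>m k) = 0" by (simp only: to_cmat_mpow)
  qed
  have "to_cmat n Z ^\<^sub>m (n+2) = 0\<^sub>m (n+2) (n+2)"
    by (rule pow_dim_eq_zero_if_traces_zero[OF to_cmat_carrier tr])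
  then have P0: "to_cmat n (mpow n Z (n+2)) = 0\<^sub>m (n+2) (n+2)" by (simp only: to_cmat_mpow)
  have e: "mpow n Z (n+2) i j = 0" if "i \<le> n + 1" "j \<le> n + 1" for i j
  proof -
    have "to_cmat n (mpow n Z (n+2)) $$ (i,j) = 0" using P0 that by simp
    then show ?thesis using that by (simp add: to_cmat_def less_Suc_eq_le)
  qed
  have "mvec n (mpow n Z (n+2)) u = (\<lambda>_. 0)"
  proof
    fix i show "mvec n (mpow n Z (n+2)) u i = 0"
    proof (cases "i \<le> n + 1")
      case True
      have "(\<Sum>k\<le>n+1. mpow n Z (n+2) i k * u k) = 0"
        by (rule sum.neutral) (use True e in auto)
      then show ?thesis using True unfolding mvec_def by simp
    qed (simp add: mvec_def)
  qed
  then show ?thesis using mvec_mpow[OF u, of Z "n+2"] by (simp only:)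
qed

section \<open>Nilpotent elements of so(1,n-1)\<close>

locale lorentz_skew =
  fixes n :: nat and M :: "vec \<Rightarrow> vec"
  assumes n3: "3 \<le> n"
    and minkvec_M: "\<And>w. minkvec n w \<Longrightarrow> minkvec n (M w)"
    and M_lincomb: "\<And>a b u v. M (\<lambda>i. a * u i + b * v i) = (\<lambda>i. a * M u i + b * M v i)"
    and M_skew: "\<And>w v. minkvec n w \<Longrightarrow> minkvec n v \<Longrightarrow> mink n (M w) v = - mink n w (M v)"
begin

lemma M_scale: "M (\<lambda>i. a * u i) = (\<lambda>i. a * M u i)"
  using M_lincomb[of a u 0 u] by simp

lemma M_add: "M (\<lambda>i. u i + v i) = (\<lambda>i. M u i + M v i)"
  using M_lincomb[of 1 u 1 v] by simp

lemma M_zero: "M (\<lambda>i. 0) = (\<lambda>i. 0)"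
  using M_scale[of 0 "\<lambda>i. 0"] by simp

lemma minkvec_M_pow: "minkvec n w \<Longrightarrow> minkvec n ((M ^^ k) w)"
  by (induction k) (auto simp: minkvec_M)

lemma M_pow_zero: "(M ^^ k) (\<lambda>i. 0) = (\<lambda>i. 0)"
  by (induction k) (auto simp: M_zero)

lemma M_pow_skew: "minkvec n w \<Longrightarrow> minkvec n v \<Longrightarrow> mink n ((M ^^ k) w) v = (-1) ^ k * mink n w ((M ^^ k) v)"
proof (induction k arbitrary: w v)
  case 0 then show ?case by simp
next
  case (Suc k)
  have "mink n ((M ^^ Suc k) w) v = mink n (M ((M ^^ k) w)) v" by simp
  also have "\<dots> = - mink n ((M ^^ k) w) (M v)" using M_skew minkvec_M_pow Suc.prems minkvec_M by auto
  also have "\<dots> = - ((-1) ^ k * mink n w ((M ^^ k) (M v)))" using Suc.IH[of w "M v"] Suc.prems minkvec_M by simp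
  also have "(M ^^ k) (M v) = (M ^^ Suc k) v" by (simp add: funpow_Suc_right del: funpow.simps)
  finally show ?case by simp
qed

lemma zero_if_square_zero:
  assumes sq: "\<And>w. minkvec n w \<Longrightarrow> M (M w) = (\<lambda>_. 0)"
  shows "\<And>w. minkvec n w \<Longrightarrow> M w = (\<lambda>_. 0)"
proof (rule ccontr)
  fix u0 assume u0: "minkvec n u0" and nz: "M u0 \<noteq> (\<lambda>_. 0)"
  define l where "l = M u0"
  have lW: "minkvec n l" using minkvec_M u0 l_def by simp
  have null: "mink n (M v) (M v) = 0" if "minkvec n v" for v
    using M_skew[of v "M v"] sq[of v] that minkvec_M by (simp add: mink_zero)
  have ll: "mink n l l = 0" using null u0 l_def by simp
  obtain w0 where w0: "minkvec n w0" "mink n l w0 = 1" using mink_exists_dual[OF n3 lW] nz l_def by auto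
  have par: "\<exists>s. M v = (\<lambda>i. s * l i)" if v: "minkvec n v" for v
  proof (rule null_orthogonal_parallel[OF n3 lW minkvec_M[OF v] ll null[OF v]])
    show "mink n l (M v) = 0" using M_skew[of u0 "M v"] u0 v minkvec_M sq[of v] l_def by (simp add: mink_zero)
    show "l \<noteq> (\<lambda>_. 0)" using nz l_def by simp
  qed
  have "mink n (M w0) w0 = 0" using M_skew[OF w0(1) w0(1)] by (simp add: mink_sym)
  obtain t where t: "M w0 = (\<lambda>i. t * l i)" using par w0 by blast
  then have "t = 0" using \<open>mink n (M w0) w0 = 0\<close> w0 by (simp add: mink_scale)
  then have Mw0: "M w0 = (\<lambda>_. 0)" using t by simp
  obtain s where s: "M u0 = (\<lambda>i. s * l i)" using par u0 by blast
  have "mink n (M u0) w0 = - mink n u0 (M w0)" using M_skew u0 w0 by simp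
  then have "s = 0" using s Mw0 w0 by (simp add: mink_scale mink_zero)
  then show False using s nz by simp
qed

lemma M_pow_image_isotropic:
  assumes nil: "\<And>w. minkvec n w \<Longrightarrow> (M ^^ (j + j)) w = (\<lambda>_. 0)"
    and a: "minkvec n a" and b: "minkvec n b"
  shows "mink n ((M ^^ j) a) ((M ^^ j) b) = 0"
proof -
  have "mink n ((M ^^ j) a) ((M ^^ j) b) = (-1) ^ j * mink n a ((M ^^ j) ((M ^^ j) b))"
    using M_pow_skew a b minkvec_M_pow by blast
  also have "(M ^^ j) ((M ^^ j) b) = (\<lambda>_. 0)"
    using nil[OF b] by (simp add: funpow_add)
  finally show ?thesis by (simp add: mink_zero)
qed

text \<open>The image of M^(j+2) is totally isotropic, hence a line (or zero) preserved by M, on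
  which the nilpotent M must vanish.\<close>
lemma pow_zero_descend:
  assumes nil: "\<And>w. minkvec n w \<Longrightarrow> (M ^^ (j + 4)) w = (\<lambda>_. 0)"
    and u: "minkvec n u"
  shows "(M ^^ (j + 3)) u = (\<lambda>_. 0)"
proof -
  have nil2: "(M ^^ ((j + 2) + (j + 2))) v = (\<lambda>_. 0)" if "minkvec n v" for v
  proof -
    have "(j + 2) + (j + 2) = j + (j + 4)" by simp
    then have "(M ^^ ((j + 2) + (j + 2))) v = (M ^^ j) ((M ^^ (j + 4)) v)"
      by (simp only: funpow_add o_apply)
    then show ?thesis using nil[OF that] M_pow_zero by simp
  qed
  define x where "x = (M ^^ (j + 2)) u"
  have xW: "minkvec n x" unfolding x_def by (rule minkvec_M_pow[OF u])
  have Mx: "M ((M ^^ (j + 2)) u) = (M ^^ (j + 2)) (M u)" by (rule funpow_swap1)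
  have Mx': "(M ^^ (j + 3)) u = M x" by (simp add: x_def numeral_eq_Suc)
  have xx: "mink n x x = 0"
    unfolding x_def by (rule M_pow_image_isotropic[OF nil2 u u])
  have xMx: "mink n x (M x) = 0"
    unfolding x_def Mx by (rule M_pow_image_isotropic[OF nil2 u minkvec_M[OF u]])
  have MxMx: "mink n (M x) (M x) = 0"
    unfolding x_def Mx by (rule M_pow_image_isotropic[OF nil2 minkvec_M[OF u] minkvec_M[OF u]])
  show ?thesis
  proof (cases "x = (\<lambda>_. 0)")
    case True
    then show ?thesis using Mx' M_zero by simp
  next
    case False
    obtain s where s: "M x = (\<lambda>i. s * x i)"
      using null_orthogonal_parallel[OF n3 xW minkvec_M[OF xW] xx MxMx xMx False] by blast
    have "(\<lambda>i. s * (s * x i)) = M (M x)" using s M_scale by simp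
    also have "\<dots> = (M ^^ (j + 4)) u" by (simp add: x_def numeral_eq_Suc)
    finally have "(\<lambda>i. s * (s * x i)) = (\<lambda>_. 0)" using nil u by simp
    then have "s = 0" using False by (auto simp: fun_eq_iff)
    then show ?thesis using Mx' s by simp
  qed
qed

lemma cube_zero_if_nilpotent:
  assumes nil: "\<And>w. minkvec n w \<Longrightarrow> (M ^^ k) w = (\<lambda>_. 0)" and w: "minkvec n w"
  shows "M (M (M w)) = (\<lambda>_. 0)"
  using nil
proof (induction k rule: less_induct)
  case (less k)
  show ?case
  proof (cases "4 \<le> k")
    case True
    then obtain j where j: "k = j + 4" using le_Suc_ex[of 4 k] by (auto simp: add.commute)
    show ?thesis using less.IH[of "j + 3"] pow_zero_descend less.prems j by simp
  next
    case False
    then obtain j where j: "3 = j + k" using le_Suc_ex[of k 3] by (auto simp: add.commute)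
    have "M (M (M w)) = (M ^^ (j + k)) w" by (simp only: j[symmetric]) (simp add: numeral_3_eq_3)
    also have "\<dots> = (M ^^ j) ((M ^^ k) w)" by (simp add: funpow_add)
    finally show ?thesis using less.prems[OF w] M_pow_zero by simp
  qed
qed

lemma M_square_sym: "minkvec n w \<Longrightarrow> minkvec n v \<Longrightarrow> mink n (M (M w)) v = mink n w (M (M v))"
  using M_skew minkvec_M by simp

lemma M_isotropic: "minkvec n w \<Longrightarrow> mink n (M w) w = 0"
  using M_skew[of w w] by (simp add: mink_sym)

lemma cube_zero_square_image_isotropic:
  assumes M3: "\<And>w. minkvec n w \<Longrightarrow> M (M (M w)) = (\<lambda>_. 0)"
    and a: "minkvec n a" and b: "minkvec n b"
  shows "mink n (M (M a)) (M (M b)) = 0"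
proof -
  have "(M ^^ (2 + 2)) w = (\<lambda>_. 0)" if "minkvec n w" for w
    using M3[OF minkvec_M[OF that]] by (simp add: numeral_eq_Suc)
  from M_pow_image_isotropic[OF this a b] show ?thesis by (simp add: numeral_2_eq_2)
qed

lemma cube_zero_square_parallel:
  assumes M3: "\<And>w. minkvec n w \<Longrightarrow> M (M (M w)) = (\<lambda>_. 0)"
    and u: "minkvec n u" and nz: "M (M u) \<noteq> (\<lambda>_. 0)" and v: "minkvec n v"
  shows "\<exists>c. M (M v) = (\<lambda>i. c * M (M u) i)"
proof -
  have iso: "mink n (M (M a)) (M (M b)) = 0" if "minkvec n a" "minkvec n b" for a b
    using M3 that by (rule cube_zero_square_image_isotropic)
  show ?thesis
    using null_orthogonal_parallel[OF n3 minkvec_M[OF minkvec_M[OF u]] minkvec_M[OF minkvec_M[OF v]]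
        iso[OF u u] iso[OF v v] iso[OF u v] nz] by blast
qed

lemma wedge_form_if_square_in_null_line:
  assumes par: "\<And>v. minkvec n v \<Longrightarrow> \<exists>c. M (M v) = (\<lambda>i. c * l i)"
    and lW: "minkvec n l" and lnz: "l \<noteq> (\<lambda>_. 0)" and ll: "mink n l l = 0" and Ml: "M l = (\<lambda>_. 0)"
    and w0: "minkvec n w0" "mink n l w0 = 1"
    and w: "minkvec n w"
  shows "M w = (\<lambda>i. mink n l w * M w0 i - mink n (M w0) w * l i)"
proof -
  have perp: "M v = (\<lambda>i. - mink n v (M w0) * l i)" if v: "minkvec n v" "mink n l v = 0" for v
  proof -
    obtain c0 where c0: "M (M w0) = (\<lambda>i. c0 * l i)" using par w0 by blast
    obtain c where c: "M (M v) = (\<lambda>i. c * l i)" using par v by blast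
    have "c = mink n (M (M v)) w0" using c w0 by (simp add: mink_scale)
    also have "\<dots> = mink n v (M (M w0))" using M_square_sym v w0 by simp
    also have "\<dots> = 0" using c0 v by (simp add: mink_scale_right mink_sym)
    finally have MMv: "M (M v) = (\<lambda>_. 0)" using c by simp
    have a1: "mink n (M v) (M v) = 0" using M_skew[of v "M v"] v minkvec_M MMv by (simp add: mink_zero)
    have a2: "mink n l (M v) = 0" using M_skew[of l v] lW v Ml by (simp add: mink_zero)
    obtain s where s: "M v = (\<lambda>i. s * l i)"
      using null_orthogonal_parallel[OF n3 lW minkvec_M[OF v(1)] ll a1 a2 lnz] by blast
    have "s = mink n (M v) w0" using s w0 by (simp add: mink_scale)
    also have "\<dots> = - mink n v (M w0)" using M_skew v w0 by simp
    finally show ?thesis using s by simp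
  qed
  define w' where "w' = (\<lambda>i. w i - mink n l w * w0 i)"
  have w'W: "minkvec n w'" using w w0 by (simp add: w'_def minkvec_def)
  have lw': "mink n l w' = 0" using w0 by (simp add: w'_def mink_diff_right mink_scale_right)
  have "w = (\<lambda>i. w' i + mink n l w * w0 i)" by (simp add: w'_def)
  then have "M w = (\<lambda>i. M w' i + mink n l w * M w0 i)" using M_add M_scale by metis
  also have "M w' = (\<lambda>i. - mink n w' (M w0) * l i)" using perp w'W lw' by simp
  also have "mink n w' (M w0) = mink n (M w0) w"
    using M_isotropic[OF w0(1)] by (simp add: w'_def mink_diff mink_scale mink_sym)
  finally show ?thesis by (auto simp: algebra_simps)
qed

lemma null_rotation_form:
  assumes nil: "\<And>w. minkvec n w \<Longrightarrow> (M ^^ k) w = (\<lambda>_. 0)"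
    and w1: "minkvec n w1" and nz: "M w1 \<noteq> (\<lambda>_. 0)"
  obtains l w0 p where "minkvec n l" "l \<noteq> (\<lambda>_. 0)" "mink n l l = 0"
    and "minkvec n w0" "mink n l w0 = 1"
    and "minkvec n p" "mink n p l = 0" "mink n p w0 = 0" "mink n p p \<noteq> 0"
    and "\<And>w. minkvec n w \<Longrightarrow> M w = (\<lambda>i. mink n l w * p i - mink n p w * l i)"
proof -
  have M3: "M (M (M w)) = (\<lambda>_. 0)" if "minkvec n w" for w
    by (rule cube_zero_if_nilpotent[OF nil that])
  obtain u where u: "minkvec n u" and nz2: "M (M u) \<noteq> (\<lambda>_. 0)"
    using zero_if_square_zero w1 nz by blast
  define l where "l = M (M u)"
  have lW: "minkvec n l" using minkvec_M u l_def by simp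
  have lnz: "l \<noteq> (\<lambda>_. 0)" using nz2 l_def by simp
  have par: "\<exists>c. M (M v) = (\<lambda>i. c * l i)" if "minkvec n v" for v
    using cube_zero_square_parallel[OF M3 u nz2 that] l_def by simp
  have ll: "mink n l l = 0"
    using cube_zero_square_image_isotropic[OF M3 u u] l_def by simp
  obtain w0 where w0: "minkvec n w0" "mink n l w0 = 1" using mink_exists_dual[OF n3 lW lnz] by blast
  have Ml: "M l = (\<lambda>_. 0)" using M3 u l_def by simp
  define p where "p = M w0"
  have pW: "minkvec n p" using minkvec_M w0 p_def by simp
  have pw0: "mink n p w0 = 0" using M_isotropic[OF w0(1)] p_def by simp
  have pl: "mink n p l = 0" using M_skew[of w0 l] w0 lW Ml p_def by (simp add: mink_zero)
  have form: "M w = (\<lambda>i. mink n l w * p i - mink n p w * l i)" if "minkvec n w" for w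
    unfolding p_def by (rule wedge_form_if_square_in_null_line[OF par lW lnz ll Ml w0 that])
  have pp: "mink n p p \<noteq> 0"
  proof
    assume pp0: "mink n p p = 0"
    have Mp: "M p = (\<lambda>_. 0)" using form[OF pW] pp0 by (simp add: mink_sym[of n l p] pl)
    have "M (M u) = (\<lambda>i. mink n l u * M p i - mink n p u * M l i)"
      using form[OF u] M_lincomb[of "mink n l u" p "- mink n p u" l] by simp
    then show False using Mp Ml l_def lnz by simp
  qed
  show thesis using that lW lnz ll w0 pW pl pw0 pp form by blast
qed

end

section \<open>Modules of the Heisenberg algebra\<close>

definition linear_op :: "(vec \<Rightarrow> vec) \<Rightarrow> bool" where
  "linear_op f \<longleftrightarrow> (\<forall>a b u v. f (\<lambda>i. a * u i + b * v i) = (\<lambda>i. a * f u i + b * f v i))"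

lemma linear_op_mvec: "linear_op (mvec n A)"
  by (simp add: linear_op_def mvec_lincomb)

lemma linear_op_add: "linear_op f \<Longrightarrow> f (\<lambda>i. u i + v i) = (\<lambda>i. f u i + f v i)"
  unfolding linear_op_def by (drule spec[of _ 1], drule spec[of _ 1]) simp

lemma linear_op_scale: "linear_op f \<Longrightarrow> f (\<lambda>i. a * u i) = (\<lambda>i. a * f u i)"
  unfolding linear_op_def by (drule spec[of _ a], drule spec[of _ 0]) simp

lemma linear_op_zero: "linear_op f \<Longrightarrow> f (\<lambda>i. 0) = (\<lambda>i. 0)"
  using linear_op_scale[of f 0 "\<lambda>i. 0"] by simp

lemma linear_op_sum:
  fixes m :: nat
  assumes "linear_op f"
  shows "f (\<lambda>i. \<Sum>j<m. v j i) = (\<lambda>i. \<Sum>j<m. f (v j) i)"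
proof (induction m)
  case 0
  then show ?case using linear_op_zero[OF assms] by simp
next
  case (Suc m)
  then show ?case using linear_op_add[OF assms, of "\<lambda>i. \<Sum>j<m. v j i" "v m"] by simp
qed

definition lincomb2 ::
  "nat \<Rightarrow> (nat \<Rightarrow> vec) \<Rightarrow> (nat \<Rightarrow> vec) \<Rightarrow> (nat \<Rightarrow> real) \<Rightarrow> (nat \<Rightarrow> real) \<Rightarrow> vec"
  where "lincomb2 m s t a b = (\<lambda>i. \<Sum>j<m. a j * s j i + b j * t j i)"

lemma lincomb2_diff:
  "(\<lambda>i. lincomb2 m s t a b i - lincomb2 m s t a' b' i) = lincomb2 m s t (\<lambda>k. a k - a' k) (\<lambda>k. b k - b' k)"
  by (auto simp: lincomb2_def sum_subtractf algebra_simps)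

lemma lincomb2_unique:
  assumes indep: "\<And>a b. lincomb2 m s t a b = (\<lambda>_. 0) \<Longrightarrow> \<forall>j<m. a j = 0 \<and> b j = 0"
    and eq: "lincomb2 m s t a b = lincomb2 m s t a' b'" and k: "k < m"
  shows "a k = a' k \<and> b k = b' k"
  using indep[of "\<lambda>k. a k - a' k" "\<lambda>k. b k - b' k"] eq k
  by (simp add: lincomb2_diff[symmetric])

lemma linear_op_lincomb2:
  assumes f: "linear_op f"
    and fs: "\<And>j. j < m \<Longrightarrow> f (s j) = lincomb2 m s t (P j) (Q j)"
    and ft: "\<And>j. j < m \<Longrightarrow> f (t j) = lincomb2 m s t (R j) (S j)"
  shows "f (lincomb2 m s t a b)
       = lincomb2 m s t (\<lambda>k. \<Sum>j<m. a j * P j k + b j * R j k) (\<lambda>k. \<Sum>j<m. a j * Q j k + b j * S j k)"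
proof -
  have "f (lincomb2 m s t a b) = (\<lambda>i. \<Sum>j<m. a j * f (s j) i + b j * f (t j) i)"
    unfolding lincomb2_def linear_op_sum[OF f] linear_op_add[OF f] linear_op_scale[OF f] ..
  also have "\<dots> = (\<lambda>i. \<Sum>j<m. \<Sum>k<m. a j * (P j k * s k i + Q j k * t k i) + b j * (R j k * s k i + S j k * t k i))"
  proof (rule ext, rule sum.cong[OF refl])
    fix i j assume "j \<in> {..<m}"
    then show "a j * f (s j) i + b j * f (t j) i
      = (\<Sum>k<m. a j * (P j k * s k i + Q j k * t k i) + b j * (R j k * s k i + S j k * t k i))"
      by (simp add: fs ft lincomb2_def sum_distrib_left sum.distrib distrib_left)
  qed
  also have "\<dots> = (\<lambda>i. \<Sum>k<m. \<Sum>j<m. a j * (P j k * s k i + Q j k * t k i) + b j * (R j k * s k i + S j k * t k i))"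
    by (subst sum.swap) rule
  also have "\<dots> = lincomb2 m s t (\<lambda>k. \<Sum>j<m. a j * P j k + b j * R j k) (\<lambda>k. \<Sum>j<m. a j * Q j k + b j * S j k)"
  proof (unfold lincomb2_def, rule ext, rule sum.cong[OF refl])
    fix i k
    show "(\<Sum>j<m. a j * (P j k * s k i + Q j k * t k i) + b j * (R j k * s k i + S j k * t k i))
      = (\<Sum>j<m. a j * P j k + b j * R j k) * s k i + (\<Sum>j<m. a j * Q j k + b j * S j k) * t k i"
      by (simp add: sum_distrib_left sum_distrib_right sum.distrib algebra_simps)
  qed
  finally show ?thesis .
qed

lemma sum_trace_mult_commute:
  fixes P Q :: "nat \<Rightarrow> nat \<Rightarrow> real"
  shows "(\<Sum>j<m. \<Sum>l<m. P j l * Q l j) = (\<Sum>j<m. \<Sum>l<m. Q j l * P l j)"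
  by (subst sum.swap) (simp add: mult.commute)

locale heisenberg_rep =
  fixes x y z :: "vec \<Rightarrow> vec"
  assumes linear_x: "linear_op x" and linear_y: "linear_op y"
    and z_eq: "\<And>u. z u = (\<lambda>i. x (y u) i - y (x u) i)"
    and x_z_commute: "\<And>u. x (z u) = z (x u)" and y_z_commute: "\<And>u. y (z u) = z (y u)"
begin

lemma linear_z: "linear_op z"
  using linear_x linear_y unfolding linear_op_def z_eq by (simp add: algebra_simps)

lemma x_funpow_z_commute: "x ((z ^^ k) u) = (z ^^ k) (x u)"
  by (induction k) (simp_all add: x_z_commute)

lemma y_funpow_z_commute: "y ((z ^^ k) u) = (z ^^ k) (y u)"
  by (induction k) (simp_all add: y_z_commute)

lemma z_lincomb2_square_zero:
  assumes zz: "\<And>j. j < m \<Longrightarrow> z (z (s j)) = (\<lambda>_. 0)"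
  shows "z (lincomb2 m s (\<lambda>j. z (s j)) a b) = lincomb2 m s (\<lambda>j. z (s j)) (\<lambda>_. 0) a"
  unfolding lincomb2_def linear_op_sum[OF linear_z] linear_op_add[OF linear_z] linear_op_scale[OF linear_z]
  using zz by (auto intro!: sum.cong)

text \<open>No Heisenberg module has a basis s, z s with z (z s) = 0: writing x and y in this basis,
  the z s-component of z s = [x, y] s is a sum of commutators of m x m matrices, whose trace
  vanishes, while it should be the identity.\<close>
lemma no_square_zero_block:
  fixes s :: "nat \<Rightarrow> vec"
  defines "t \<equiv> \<lambda>j. z (s j)"
  assumes m: "0 < m"
    and indep: "\<And>a b. lincomb2 m s t a b = (\<lambda>_. 0) \<Longrightarrow> \<forall>j<m. a j = 0 \<and> b j = 0"
    and zt: "\<And>j. j < m \<Longrightarrow> z (t j) = (\<lambda>_. 0)"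
    and x_block: "\<And>j. j < m \<Longrightarrow> \<exists>a b. x (s j) = lincomb2 m s t a b"
    and y_block: "\<And>j. j < m \<Longrightarrow> \<exists>a b. y (s j) = lincomb2 m s t a b"
  shows False
proof -
  obtain A A' where A: "\<And>j. j < m \<Longrightarrow> x (s j) = lincomb2 m s t (A j) (A' j)"
    using x_block by metis
  obtain B B' where B: "\<And>j. j < m \<Longrightarrow> y (s j) = lincomb2 m s t (B j) (B' j)"
    using y_block by metis
  let ?\<delta> = "\<lambda>j k. if j = k then 1 else 0 :: real"
  have zs: "z (s j) = lincomb2 m s t (\<lambda>_. 0) (?\<delta> j)" if j: "j < m" for j
  proof
    fix i
    have "(\<Sum>k<m. 0 * s k i + ?\<delta> j k * t k i) = t j i"
      using j by (subst sum_eq_single[of _ j]) auto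
    then show "z (s j) i = lincomb2 m s t (\<lambda>_. 0) (?\<delta> j) i" by (simp add: lincomb2_def t_def)
  qed
  have z_comb: "z (lincomb2 m s t a b) = lincomb2 m s t (\<lambda>_. 0) a" for a b
    unfolding t_def by (rule z_lincomb2_square_zero) (use zt in \<open>simp add: t_def\<close>)
  have xt: "x (t j) = lincomb2 m s t (\<lambda>_. 0) (A j)" if "j < m" for j
    using x_z_commute[of "s j"] A[OF that] z_comb by (simp add: t_def)
  have yt: "y (t j) = lincomb2 m s t (\<lambda>_. 0) (B j)" if "j < m" for j
    using y_z_commute[of "s j"] B[OF that] z_comb by (simp add: t_def)
  have xy: "x (y (s j)) = lincomb2 m s t (\<lambda>k. \<Sum>l<m. B j l * A l k)
                                         (\<lambda>k. \<Sum>l<m. B j l * A' l k + B' j l * A l k)" if "j < m" for j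
    using linear_op_lincomb2[OF linear_x A xt] B[OF that] by simp
  have yx: "y (x (s j)) = lincomb2 m s t (\<lambda>k. \<Sum>l<m. A j l * B l k)
                                         (\<lambda>k. \<Sum>l<m. A j l * B' l k + A' j l * B l k)" if "j < m" for j
    using linear_op_lincomb2[OF linear_y B yt] A[OF that] by simp
  have diag: "(\<Sum>l<m. B j l * A' l j + B' j l * A l j) - (\<Sum>l<m. A j l * B' l j + A' j l * B l j) = 1"
    if j: "j < m" for j
  proof -
    have "lincomb2 m s t (\<lambda>_. 0) (?\<delta> j) = (\<lambda>i. x (y (s j)) i - y (x (s j)) i)"
      using zs[OF j] z_eq by simp
    also have "\<dots> = lincomb2 m s t
       (\<lambda>k. (\<Sum>l<m. B j l * A l k) - (\<Sum>l<m. A j l * B l k))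
       (\<lambda>k. (\<Sum>l<m. B j l * A' l k + B' j l * A l k) - (\<Sum>l<m. A j l * B' l k + A' j l * B l k))"
      unfolding xy[OF j] yx[OF j] lincomb2_diff ..
    finally have "?\<delta> j j = (\<Sum>l<m. B j l * A' l j + B' j l * A l j) - (\<Sum>l<m. A j l * B' l j + A' j l * B l j)"
      using lincomb2_unique[OF indep _ j] by blast
    then show ?thesis by simp
  qed
  have "real m = (\<Sum>j<m. (\<Sum>l<m. B j l * A' l j + B' j l * A l j) - (\<Sum>l<m. A j l * B' l j + A' j l * B l j))"
    using diag by simp
  also have "\<dots> = 0"
    by (simp only: sum_subtractf sum.distrib sum_trace_mult_commute[of B A'] sum_trace_mult_commute[of B' A])
  finally have "m = 0" by simp
  then show False using m by simp
qed

lemma no_square_zero_block_in_image: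
  fixes s :: "nat \<Rightarrow> vec"
  defines "t \<equiv> \<lambda>j. z (s j)"
  assumes m: "0 < m"
    and indep: "\<And>a b. lincomb2 m s t a b = (\<lambda>_. 0) \<Longrightarrow> \<forall>j<m. a j = 0 \<and> b j = 0"
    and zt: "\<And>j. j < m \<Longrightarrow> z (t j) = (\<lambda>_. 0)"
    and s_image: "\<And>j. j < m \<Longrightarrow> \<exists>u. s j = (z ^^ k) u"
    and image_block: "\<And>u. \<exists>a b. (z ^^ k) u = lincomb2 m s t a b"
  shows False
proof -
  have x_block: "\<exists>a b. x (s j) = lincomb2 m s t a b"
    and y_block: "\<exists>a b. y (s j) = lincomb2 m s t a b" if j: "j < m" for j
  proof -
    obtain u where u: "s j = (z ^^ k) u" using s_image[OF j] by blast
    show "\<exists>a b. x (s j) = lincomb2 m s t a b" "\<exists>a b. y (s j) = lincomb2 m s t a b"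
      unfolding u x_funpow_z_commute y_funpow_z_commute by (rule image_block)+
  qed
  show False
    using no_square_zero_block[where s = s and m = m, OF m indep[unfolded t_def] zt[unfolded t_def]]
      x_block y_block unfolding t_def by blast
qed

lemma no_square_zero_pair_in_image:
  assumes indep: "\<And>a b. (\<lambda>i. a * s i + b * z s i) = (\<lambda>_. 0) \<Longrightarrow> a = 0 \<and> b = 0"
    and zz: "z (z s) = (\<lambda>_. 0)" and s_image: "s = (z ^^ k) u0"
    and image_span: "\<And>u. \<exists>a b. (z ^^ k) u = (\<lambda>i. a * s i + b * z s i)"
  shows False
proof (rule no_square_zero_block_in_image[of 1 "\<lambda>_. s" k])
  show "\<forall>j<1. a j = 0 \<and> b j = 0" if "lincomb2 1 (\<lambda>_. s) (\<lambda>j. z s) a b = (\<lambda>_. 0)" for a b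
    using indep[of "a 0" "b 0"] that by (simp add: lincomb2_def)
  show "\<exists>a b. (z ^^ k) u = lincomb2 1 (\<lambda>_. s) (\<lambda>j. z s) a b" for u
    using image_span[of u] by (auto simp: lincomb2_def)
qed (use zz s_image in auto)

lemma no_square_zero_quad_in_image:
  assumes indep: "\<And>a0 a1 b0 b1. (\<lambda>i. a0 * s0 i + a1 * s1 i + b0 * z s0 i + b1 * z s1 i) = (\<lambda>_. 0)
      \<Longrightarrow> a0 = 0 \<and> a1 = 0 \<and> b0 = 0 \<and> b1 = 0"
    and zz: "z (z s0) = (\<lambda>_. 0)" "z (z s1) = (\<lambda>_. 0)"
    and s_image: "s0 = (z ^^ k) u0" "s1 = (z ^^ k) u1"
    and image_span: "\<And>u. \<exists>a0 a1 b0 b1. (z ^^ k) u = (\<lambda>i. a0 * s0 i + a1 * s1 i + b0 * z s0 i + b1 * z s1 i)"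
  shows False
proof -
  define s where "s j = (if j = 0 then s0 else s1)" for j :: nat
  have comb: "lincomb2 2 s (\<lambda>j. z (s j)) a b = (\<lambda>i. a 0 * s0 i + a 1 * s1 i + b 0 * z s0 i + b 1 * z s1 i)"
    for a b by (simp add: lincomb2_def s_def numeral_2_eq_2 algebra_simps)
  show False
  proof (rule no_square_zero_block_in_image[of 2 s k])
    show "\<forall>j<2. a j = 0 \<and> b j = 0" if "lincomb2 2 s (\<lambda>j. z (s j)) a b = (\<lambda>_. 0)" for a b
      using indep[of "a 0" "a 1" "b 0" "b 1"] that by (auto simp: comb less_2_cases_iff)
    show "\<exists>a b. (z ^^ k) u = lincomb2 2 s (\<lambda>j. z (s j)) a b" for u
    proof -
      obtain a0 a1 b0 b1 where "(z ^^ k) u = (\<lambda>i. a0 * s0 i + a1 * s1 i + b0 * z s0 i + b1 * z s1 i)"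
        using image_span by blast
      then show ?thesis
        by (intro exI[of _ "\<lambda>j. if j = 0 then a0 else a1"] exI[of _ "\<lambda>j. if j = 0 then b0 else b1"])
          (simp add: comb)
    qed
  qed (use zz s_image in \<open>auto simp: s_def less_2_cases_iff\<close>)
qed

end

section \<open>Central elements of Heisenberg algebras in p\<close>

definition transl_part :: "nat \<Rightarrow> mat \<Rightarrow> vec" where
  "transl_part n Z = mink_proj n (\<lambda>i. - mvec n Z (e_last n) i)"

definition lorentz_part :: "nat \<Rightarrow> mat \<Rightarrow> vec \<Rightarrow> vec" where
  "lorentz_part n Z w = mink_proj n (mvec n Z w)"

lemma minkvec_transl_part: "minkvec n (transl_part n Z)"
  by (simp add: transl_part_def minkvec_mink_proj)

lemma mvec_e0_zero_if_nilpotent: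
  assumes P: "Z \<in> palg n" and nil: "(mvec n Z ^^ k) e0 = (\<lambda>_. 0)"
  shows "mvec n Z e0 = (\<lambda>_. 0)"
proof -
  have Z_e0: "mvec n Z e0 = (\<lambda>i. Z 0 0 * e0 i)"
  proof
    fix i show "mvec n Z e0 i = Z 0 0 * e0 i"
    proof (cases "i \<le> n + 1")
      case True
      have "(\<Sum>k\<le>n+1. Z i k * e0 k) = Z i 0 * e0 0" by (rule sum_eq_single) (auto simp: e0_def)
      moreover have "i \<noteq> 0 \<Longrightarrow> Z i 0 = 0" using P True by (auto simp: palg_def)
      ultimately show ?thesis using True by (auto simp: mvec_def e0_def)
    qed (simp add: mvec_def e0_def)
  qed
  have "(mvec n Z ^^ j) e0 = (\<lambda>i. Z 0 0 ^ j * e0 i)" for j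
  proof (induction j)
    case (Suc j)
    then show ?case by (simp add: mvec_scale Z_e0 mult.assoc mult.left_commute)
  qed simp
  then have "Z 0 0 ^ k = 0" using fun_cong[OF nil, of 0] by (simp add: e0_def)
  then show ?thesis using Z_e0 by simp
qed

text \<open>Elements of so(2,n) annihilating e0 form the Poincare algebra of the Minkowski patch;
  q and M below are the translation and Lorentz parts.\<close>
locale poincare_element =
  fixes n :: nat and Z :: mat
  assumes n3: "3 \<le> n" and so2n: "Z \<in> so2n n" and Z_e0: "mvec n Z e0 = (\<lambda>_. 0)"
begin

abbreviation "z \<equiv> mvec n Z"
abbreviation "q \<equiv> transl_part n Z"
abbreviation "M \<equiv> lorentz_part n Z"

lemma mvec_e_last: "z (e_last n) = (\<lambda>i. - q i)"
proof
  fix i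
  have "z (e_last n) (n+1) = qform n (z (e_last n)) e0" by (simp add: qform_e0_right[OF n3])
  also have "\<dots> = 0" using so2n_skew[OF n3 so2n] Z_e0 by (simp add: qform_e_last[OF n3])
  finally have top: "z (e_last n) (n+1) = 0" .
  have "z (e_last n) 0 = qform n (z (e_last n)) (e_last n)" by (simp add: qform_e_last_right[OF n3])
  also have "\<dots> = - z (e_last n) 0" using so2n_skew[OF n3 so2n] by (simp add: qform_e_last[OF n3])
  finally have bottom: "z (e_last n) 0 = 0" by simp
  show "z (e_last n) i = - q i"
    using top bottom vsupported_mvec[of n Z "e_last n"]
    unfolding transl_part_def mink_proj_def vsupported_def
    by (cases "i = 0"; cases "i = n + 1"; cases "n + 1 < i") auto
qed

lemma mvec_minkvec: "minkvec n w \<Longrightarrow> z w = (\<lambda>i. mink n q w * e0 i + M w i)"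
proof
  fix i assume w: "minkvec n w"
  have "z w (n+1) = qform n (z w) e0" by (simp add: qform_e0_right[OF n3])
  also have "\<dots> = 0" using so2n_skew[OF n3 so2n] Z_e0 by (simp add: qform_minkvec[OF w] mink_zero)
  finally have top: "z w (n+1) = 0" .
  have "z w 0 = qform n (z w) (e_last n)" by (simp add: qform_e_last_right[OF n3])
  also have "\<dots> = - qform n w (\<lambda>i. - q i)" using so2n_skew[OF n3 so2n] by (simp add: mvec_e_last)
  also have "\<dots> = mink n q w"
    using mink_scale_right[of n w "-1" q] by (simp add: qform_minkvec[OF w] mink_sym)
  finally have bottom: "z w 0 = mink n q w" .
  show "z w i = mink n q w * e0 i + M w i"
    using top bottom vsupported_mvec[of n Z w]
    unfolding lorentz_part_def mink_proj_def e0_def vsupported_def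
    by (cases "i = 0"; cases "i = n + 1"; cases "n + 1 < i") auto
qed

lemma mvec_decomp: "z u = (\<lambda>i. mink n q u * e0 i + M (mink_proj n u) i - u (n+1) * q i)"
proof -
  have "z u = z (\<lambda>i. u 0 * e0 i + mink_proj n u i + u (n+1) * e_last n i)"
    by (rule mvec_cong) (auto simp: e0_def mink_proj_def e_last_def Suc_le_eq)
  also have "\<dots> = (\<lambda>i. u 0 * z e0 i + z (mink_proj n u) i + u (n+1) * z (e_last n) i)"
    by (simp add: mvec_add mvec_scale)
  also have "\<dots> = (\<lambda>i. mink n q u * e0 i + M (mink_proj n u) i - u (n+1) * q i)"
    by (simp add: Z_e0 mvec_e_last mvec_minkvec[OF minkvec_mink_proj] mink_mink_proj_right[OF n3])
  finally show ?thesis .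
qed

lemma lorentz_skew_lorentz_part: "lorentz_skew n M"
proof
  show "3 \<le> n" by (rule n3)
  show "minkvec n (M w)" for w by (simp add: lorentz_part_def minkvec_mink_proj)
  show "M (\<lambda>i. a * u i + b * v i) = (\<lambda>i. a * M u i + b * M v i)" for a b u v
    by (auto simp: lorentz_part_def mink_proj_def mvec_lincomb)
  show "mink n (M w) v = - mink n w (M v)" if "minkvec n w" "minkvec n v" for w v
    using so2n_skew[OF n3 so2n, of w v]
    by (simp add: lorentz_part_def mink_mink_proj[OF n3] mink_mink_proj_right[OF n3] qform_minkvec that)
qed

end

sublocale poincare_element \<subseteq> M: lorentz_skew n "lorentz_part n Z"
  by (rule lorentz_skew_lorentz_part)

context poincare_element
begin

lemma funpow_minkvec: "minkvec n w \<Longrightarrow> \<exists>c. (z ^^ k) w = (\<lambda>i. c * e0 i + (M ^^ k) w i)"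
proof (induction k)
  case 0
  then show ?case by (intro exI[of _ 0]) simp
next
  case (Suc k)
  then obtain c where c: "(z ^^ k) w = (\<lambda>i. c * e0 i + (M ^^ k) w i)" by blast
  have "(z ^^ Suc k) w = (\<lambda>i. c * z e0 i + 1 * z ((M ^^ k) w) i)"
    using c mvec_lincomb[of n Z c e0 1] by simp
  also have "\<dots> = (\<lambda>i. mink n q ((M ^^ k) w) * e0 i + (M ^^ Suc k) w i)"
    using Z_e0 mvec_minkvec[OF M.minkvec_M_pow[OF Suc.prems]] by simp
  finally show ?case by blast
qed

lemma lorentz_part_nilpotent:
  assumes nil: "(z ^^ k) w = (\<lambda>_. 0)" and w: "minkvec n w"
  shows "(M ^^ k) w = (\<lambda>_. 0)"
proof
  fix i
  obtain c where c: "(z ^^ k) w = (\<lambda>i. c * e0 i + (M ^^ k) w i)" using funpow_minkvec[OF w] by blast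
  have "minkvec n ((M ^^ k) w)" by (rule M.minkvec_M_pow[OF w])
  then show "(M ^^ k) w i = 0"
    using fun_cong[OF nil, of i] unfolding c minkvec_def e0_def by (cases "i = 0") auto
qed

end

locale heisenberg_in_p =
  fixes n :: nat and X Y Z :: mat
  assumes n3: "3 \<le> n" and X: "supported n X" and Z: "Z \<in> so2n n"
    and XY: "bracket n X Y = Z" and XZ: "bracket n X Z = (\<lambda>_ _. 0)" and YZ: "bracket n Y Z = (\<lambda>_ _. 0)"
    and Zp: "Z \<in> palg n"

sublocale heisenberg_in_p \<subseteq> heisenberg_rep "mvec n X" "mvec n Y" "mvec n Z"
proof
  show "linear_op (mvec n X)" "linear_op (mvec n Y)" by (rule linear_op_mvec)+
  fix u
  show "mvec n Z u = (\<lambda>i. mvec n X (mvec n Y u) i - mvec n Y (mvec n X u) i)"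
    using mvec_bracket[of n X Y u] XY by simp
  have "mvec n (bracket n X Z) u = (\<lambda>_. 0)" "mvec n (bracket n Y Z) u = (\<lambda>_. 0)"
    using XZ YZ by (simp_all add: mvec_def fun_eq_iff)
  then show "mvec n X (mvec n Z u) = mvec n Z (mvec n X u)" "mvec n Y (mvec n Z u) = mvec n Z (mvec n Y u)"
    unfolding mvec_bracket by (auto simp: fun_eq_iff)
qed

context heisenberg_in_p
begin

lemma mvec_Z_e0: "mvec n Z e0 = (\<lambda>_. 0)"
  using mvec_e0_zero_if_nilpotent[OF Zp]
    mvec_commutator_nilpotent[OF X XY XZ vsupported_e0] .

end

sublocale heisenberg_in_p \<subseteq> poincare_element n Z
  using n3 Z mvec_Z_e0 by unfold_locales

context heisenberg_in_p
begin

lemma lorentz_part_pow_zero: "minkvec n w \<Longrightarrow> (M ^^ (n + 2)) w = (\<lambda>_. 0)"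
  using lorentz_part_nilpotent mvec_commutator_nilpotent[OF X XY XZ]
    vsupported_minkvec by blast

lemma transl_part_as_image: "q = z (\<lambda>i. - e_last n i)"
  using mvec_scale[of n Z "-1" "e_last n"] mvec_e_last by simp

end

lemma det2_nonzero_imp_trivial_solution:
  fixes A B C D a b :: real
  assumes "a * A + b * B = 0" "a * C + b * D = 0" "A * D - B * C \<noteq> 0"
  shows "a = 0 \<and> b = 0"
proof -
  have "a * (A * D - B * C) = D * (a * A + b * B) - B * (a * C + b * D)"
    and "b * (A * D - B * C) = A * (a * C + b * D) - C * (a * A + b * B)"
    by (simp_all add: algebra_simps)
  then have "a * (A * D - B * C) = 0" "b * (A * D - B * C) = 0"
    using assms(1,2) by simp_all
  then show ?thesis using assms(3) by simp
qed

lemma cramer_2x2: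
  fixes A B C D e f :: real
  assumes det: "A * D - B * C \<noteq> 0"
  obtains x y where "x * A + y * B = e" "x * C + y * D = f"
proof
  have "(e * D - f * B) * A + (f * A - e * C) * B = e * (A * D - B * C)"
    and "(e * D - f * B) * C + (f * A - e * C) * D = f * (A * D - B * C)"
    by (simp_all add: algebra_simps)
  then show "(e * D - f * B) / (A * D - B * C) * A + (f * A - e * C) / (A * D - B * C) * B = e"
    and "(e * D - f * B) / (A * D - B * C) * C + (f * A - e * C) / (A * D - B * C) * D = f"
    using det by (simp_all add: divide_simps)
qed

text \<open>The case of a nonzero Lorentz part, which by null_rotation_form is a null rotation;
  it leads to a contradiction.\<close>
locale heisenberg_null_rotation = heisenberg_in_p +
  fixes l w0 p :: vec
  assumes l: "minkvec n l" and l_nonzero: "l \<noteq> (\<lambda>_. 0)" and ll: "mink n l l = 0"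
    and w0: "minkvec n w0" and lw0: "mink n l w0 = 1"
    and p: "minkvec n p" and pl: "mink n p l = 0" and pw0: "mink n p w0 = 0" and pp: "mink n p p \<noteq> 0"
    and M_form: "\<And>w. minkvec n w \<Longrightarrow> M w = (\<lambda>i. mink n l w * p i - mink n p w * l i)"
begin

definition comb :: "real \<Rightarrow> real \<Rightarrow> real \<Rightarrow> real \<Rightarrow> vec" where
  "comb a b c d = (\<lambda>i. a * e0 i + b * l i + c * p i + d * q i)"

lemma comb_0: "comb a b c d 0 = a"
  using l p minkvec_transl_part by (simp add: comb_def e0_def minkvec_def)

lemma comb_top: "comb a b c d (n + 1) = 0"
  using l p minkvec_transl_part by (simp add: comb_def e0_def minkvec_def)

lemma mink_comb: "mink n v (comb a b c d) = b * mink n v l + c * mink n v p + d * mink n v q"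
  by (simp add: comb_def mink_add_right mink_scale_right mink_e0_right[OF n3])

lemma z_eq_comb: "z u = comb (mink n q u) (- mink n p u) (mink n l u) (- u (n + 1))"
proof -
  have "M (mink_proj n u) = (\<lambda>i. mink n l u * p i - mink n p u * l i)"
    using M_form[OF minkvec_mink_proj] by (simp add: mink_mink_proj_right[OF n3])
  then show ?thesis unfolding mvec_decomp by (auto simp: comb_def algebra_simps)
qed

lemma z_comb: "z (comb a b c d)
  = comb (b * mink n q l + c * mink n q p + d * mink n q q) (- (c * mink n p p + d * mink n q p)) (d * mink n q l) 0"
  unfolding z_eq_comb[of "comb a b c d"] comb_top mink_comb
  using ll pl by (simp add: mink_sym[of n l p] mink_sym[of n p q] mink_sym[of n l q])

lemma z_l: "z l = comb (mink n q l) 0 0 0"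
  using z_eq_comb[of l] ll pl l by (simp add: mink_sym[of n l q] minkvec_def)

text \<open>Otherwise the image of z^3 is the plane of l and z l, a nonzero multiple of e0.\<close>
lemma transl_part_orth_null_direction: "mink n q l = 0"
proof (rule ccontr)
  assume ql: "mink n q l \<noteq> 0"
  define K where "K = - mink n p p * mink n q l"
  have K: "K \<noteq> 0" using ql pp by (simp add: K_def)
  have z3: "(z ^^ 3) u = comb (K * mink n l u) (- K * u (n + 1)) 0 0" for u
    by (simp add: numeral_3_eq_3 z_eq_comb[of u] z_comb K_def algebra_simps)
  show False
  proof (rule no_square_zero_pair_in_image[of l])
    show "a = 0 \<and> b = 0" if ab: "(\<lambda>i. a * l i + b * z l i) = (\<lambda>_. 0)" for a b
    proof -
      have "b * mink n q l = 0"
        using fun_cong[OF ab, of 0] l by (simp add: z_l comb_0 minkvec_def)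
      then have b: "b = 0" using ql by simp
      then have "(\<lambda>i. a * l i) = (\<lambda>_. 0)" using ab by simp
      then show ?thesis using b l_nonzero by (auto simp: fun_eq_iff)
    qed
    show "z (z l) = (\<lambda>_. 0)" unfolding z_l z_comb by (simp add: comb_def)
    show "l = (z ^^ 3) (\<lambda>i. - (1 / K) * e_last n i)"
    proof -
      have "mink n l (\<lambda>i. - (1 / K) * e_last n i) = 0"
        by (simp only: mink_scale_right mink_e_last_right[OF n3] mult_zero_right)
      moreover have "(\<lambda>i. - (1 / K) * e_last n i) (n + 1) = - (1 / K)" by (simp add: e_last_def)
      ultimately show ?thesis unfolding z3 using K by (simp add: comb_def)
    qed
    show "\<exists>a b. (z ^^ 3) u = (\<lambda>i. a * l i + b * z l i)" for u
      using ql by (intro exI[of _ "- K * u (n + 1)"] exI[of _ "K * mink n l u / mink n q l"])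
        (simp add: z3 z_l comb_def fun_eq_iff)
  qed
qed

lemma z_w0: "z w0 = comb (mink n q w0) 0 1 0"
  using z_eq_comb[of w0] lw0 pw0 w0 by (simp add: minkvec_def)

lemma z_z_w0: "z (z w0) = comb (mink n q p) (- mink n p p) 0 0"
  unfolding z_w0 z_comb transl_part_orth_null_direction by simp

lemma z_z_z_w0: "z (z (z w0)) = (\<lambda>_. 0)"
  unfolding z_z_w0 z_comb transl_part_orth_null_direction by (simp add: comb_def)

lemma z_q: "z q = comb (mink n q q) (- mink n q p) 0 0"
  using z_eq_comb[of q] minkvec_transl_part transl_part_orth_null_direction
  by (simp add: mink_sym[of n p q] mink_sym[of n l q] minkvec_def)

lemma z_z_q: "z (z q) = (\<lambda>_. 0)"
  unfolding z_q z_comb transl_part_orth_null_direction by (simp add: comb_def)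

text \<open>Otherwise the image of z has the basis z w0, q, z (z w0), z q, and z^2 vanishes on it.\<close>
lemma gram_degenerate: "mink n q p ^ 2 = mink n p p * mink n q q"
proof (rule ccontr)
  let ?qp = "mink n q p" and ?pp = "mink n p p" and ?qq = "mink n q q"
  assume "?qp ^ 2 \<noteq> ?pp * ?qq"
  then have det: "?qp * ?qp - ?pp * ?qq \<noteq> 0" and det': "?pp * ?qq - ?qp * ?qp \<noteq> 0"
    by (simp_all add: power2_eq_square)
  have comb4: "(\<lambda>i. a0 * z w0 i + a1 * q i + b0 * z (z w0) i + b1 * z q i)
      = comb (a0 * mink n q w0 + b0 * ?qp + b1 * ?qq) (- (b0 * ?pp + b1 * ?qp)) a0 a1" for a0 a1 b0 b1
    unfolding z_z_w0 unfolding z_w0 z_q by (simp add: comb_def fun_eq_iff algebra_simps)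
  have images: "z w0 = (z ^^ 1) w0" "q = (z ^^ 1) (\<lambda>i. - e_last n i)"
    using transl_part_as_image by simp_all
  show False
  proof (rule no_square_zero_quad_in_image[OF _ z_z_z_w0 z_z_q images])
    fix a0 a1 b0 b1
    assume "(\<lambda>i. a0 * z w0 i + a1 * q i + b0 * z (z w0) i + b1 * z q i) = (\<lambda>_. 0)"
    then have V: "comb (a0 * mink n q w0 + b0 * ?qp + b1 * ?qq) (- (b0 * ?pp + b1 * ?qp)) a0 a1 = (\<lambda>_. 0)"
      by (simp only: comb4)
    have "a0 * ?pp + a1 * ?qp = 0" and "a0 * ?qp + a1 * ?qq = 0"
      using arg_cong[OF V, of "mink n p"] arg_cong[OF V, of "mink n q"] pl transl_part_orth_null_direction
      by (simp_all add: mink_comb mink_zero mink_sym[of n p q])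
    then have a: "a0 = 0 \<and> a1 = 0" using det' by (rule det2_nonzero_imp_trivial_solution)
    have "b0 * ?pp + b1 * ?qp = 0" and "b0 * ?qp + b1 * ?qq = 0"
      using arg_cong[OF V, of "mink n w0"] fun_cong[OF V, of 0] a lw0 pw0
      by (simp_all add: mink_comb mink_zero mink_sym[of n w0] comb_0)
    then have "b0 = 0 \<and> b1 = 0" using det' by (rule det2_nonzero_imp_trivial_solution)
    with a show "a0 = 0 \<and> a1 = 0 \<and> b0 = 0 \<and> b1 = 0" by simp
  next
    fix u
    define E where "E = mink n q u - mink n l u * mink n q w0"
    obtain b0 b1 where b: "b0 * ?qp + b1 * ?qq = E" "b0 * ?pp + b1 * ?qp = mink n p u"
      using cramer_2x2[of ?qp ?qp ?qq ?pp] det by (metis mult.commute)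
    have e1: "mink n q u = mink n l u * mink n q w0 + b0 * ?qp + b1 * ?qq"
      using b(1) unfolding E_def by linarith
    have "z u = comb (mink n l u * mink n q w0 + b0 * ?qp + b1 * ?qq) (- (b0 * ?pp + b1 * ?qp))
        (mink n l u) (- u (n + 1))"
      by (simp only: z_eq_comb e1 b(2))
    then show "\<exists>a0 a1 b0 b1. (z ^^ 1) u = (\<lambda>i. a0 * z w0 i + a1 * q i + b0 * z (z w0) i + b1 * z q i)"
      unfolding comb4[symmetric]
      by (intro exI[of _ "mink n l u"] exI[of _ "- u (n + 1)"] exI[of _ b0] exI[of _ b1]) simp
  qed
qed

lemma transl_part_in_plane:
  obtains \<alpha> \<beta> where "q = (\<lambda>i. \<alpha> * l i + \<beta> * p i)"
proof -
  let ?qp = "mink n q p" and ?pp = "mink n p p"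
  define \<beta> where "\<beta> = ?qp / ?pp"
  define q' where "q' = (\<lambda>i. q i - \<beta> * p i)"
  have q'W: "minkvec n q'" using minkvec_transl_part p by (auto simp: q'_def minkvec_def)
  have "mink n q' q' = mink n q q - 2 * \<beta> * ?qp + \<beta> ^ 2 * ?pp"
    unfolding q'_def
    by (simp add: mink_diff mink_diff_right mink_scale mink_scale_right mink_sym[of n p q]
        power2_eq_square algebra_simps)
  also have "\<dots> = 0"
    using gram_degenerate pp by (simp add: \<beta>_def field_simps power2_eq_square)
  finally have q'q': "mink n q' q' = 0" .
  have lq': "mink n l q' = 0"
    using transl_part_orth_null_direction pl
    by (simp add: q'_def mink_diff_right mink_scale_right mink_sym[of n l q] mink_sym[of n l p])
  obtain \<alpha> where "q' = (\<lambda>i. \<alpha> * l i)"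
    using null_orthogonal_parallel[OF n3 l q'W ll q'q' lq' l_nonzero] by blast
  then have "q = (\<lambda>i. \<alpha> * l i + \<beta> * p i)" by (auto simp: q'_def fun_eq_iff algebra_simps)
  then show thesis by (rule that)
qed

text \<open>As q lies in the plane of l and p, the image of z is the plane of z w0 and z (z w0).\<close>
lemma null_rotation_impossible: False
proof -
  let ?qp = "mink n q p" and ?pp = "mink n p p"
  obtain \<alpha> \<beta> where q_eq: "q = (\<lambda>i. \<alpha> * l i + \<beta> * p i)" by (rule transl_part_in_plane)
  then have qf: "q i = \<alpha> * l i + \<beta> * p i" for i by simp
  have qlin: "mink n q v = \<alpha> * mink n l v + \<beta> * mink n p v" for v
    by (subst q_eq) (simp add: mink_lincomb)
  show False
  proof (rule no_square_zero_pair_in_image[of "z w0" 1 w0])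
    show "a = 0 \<and> b = 0" if V: "(\<lambda>i. a * z w0 i + b * z (z w0) i) = (\<lambda>_. 0)" for a b
    proof -
      have "(\<lambda>i. a * z w0 i + b * z (z w0) i) = comb (a * mink n q w0 + b * ?qp) (- (b * ?pp)) a 0"
        unfolding z_z_w0 unfolding z_w0 by (simp add: comb_def fun_eq_iff algebra_simps)
      then have V': "comb (a * mink n q w0 + b * ?qp) (- (b * ?pp)) a 0 = (\<lambda>_. 0)" using V by simp
      have "a * ?pp = 0" using arg_cong[OF V', of "mink n p"] pl
        by (simp add: mink_comb mink_zero)
      then have a: "a = 0" using pp by simp
      have "b * ?pp = 0" using arg_cong[OF V', of "mink n w0"] lw0 a
        by (simp add: mink_comb mink_zero mink_sym[of n w0 l])
      then show ?thesis using a pp by simp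
    qed
    show "z (z (z w0)) = (\<lambda>_. 0)" by (rule z_z_z_w0)
    show "z w0 = (z ^^ 1) w0" by simp
    show "\<exists>a b. (z ^^ 1) u = (\<lambda>i. a * z w0 i + b * z (z w0) i)" for u
    proof (intro exI)
      show "(z ^^ 1) u = (\<lambda>i. (mink n l u - u (n + 1) * \<beta>) * z w0 i
          + ((mink n p u + u (n + 1) * \<alpha>) / ?pp) * z (z w0) i)"
        unfolding z_z_w0 unfolding z_w0 One_nat_def funpow.simps(2) funpow_0 o_apply z_eq_comb[of u]
        using pp lw0 pw0 pl by (simp add: comb_def qf qlin mink_sym[of n l p] fun_eq_iff field_simps)
    qed
  qed
qed

end

context heisenberg_in_p
begin

lemma lorentz_part_zero: "minkvec n w \<Longrightarrow> M w = (\<lambda>_. 0)"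
proof (rule ccontr)
  assume w: "minkvec n w" and nonzero: "M w \<noteq> (\<lambda>_. 0)"
  show False
  proof (rule M.null_rotation_form[OF lorentz_part_pow_zero w nonzero])
    fix l w0 p
    assume "minkvec n l" "l \<noteq> (\<lambda>_. 0)" "mink n l l = 0" "minkvec n w0" "mink n l w0 = 1"
      "minkvec n p" "mink n p l = 0" "mink n p w0 = 0" "mink n p p \<noteq> 0"
      "\<And>w. minkvec n w \<Longrightarrow> M w = (\<lambda>i. mink n l w * p i - mink n p w * l i)"
    then interpret heisenberg_null_rotation n X Y Z l w0 p
      by unfold_locales
    show False by (rule null_rotation_impossible)
  qed
qed

lemma mvec_eq_translation: "z u = (\<lambda>i. mink n q u * e0 i - u (n + 1) * q i)"
  using mvec_decomp[of u] lorentz_part_zero[OF minkvec_mink_proj] by simp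

text \<open>Otherwise the image of z is the plane of q and z q, a nonzero multiple of e0.\<close>
lemma transl_part_null: "mink n q q = 0"
proof (rule ccontr)
  assume qq: "mink n q q \<noteq> 0"
  have zq: "z q = (\<lambda>i. mink n q q * e0 i)"
    using mvec_eq_translation[of q] minkvec_transl_part by (simp add: minkvec_def)
  show False
  proof (rule no_square_zero_pair_in_image[of q 1 "\<lambda>i. - e_last n i"])
    show "a = 0 \<and> b = 0" if V: "(\<lambda>i. a * q i + b * z q i) = (\<lambda>_. 0)" for a b
    proof -
      have "b * mink n q q = 0"
        using fun_cong[OF V, of 0] minkvec_transl_part by (simp add: zq e0_def minkvec_def)
      then have b: "b = 0" using qq by simp
      then have "mink n q (\<lambda>i. a * q i) = 0" using V by (simp add: mink_zero)
      then show ?thesis using b qq by (simp add: mink_scale_right)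
    qed
    show "z (z q) = (\<lambda>_. 0)" by (simp add: zq mvec_scale Z_e0)
    show "q = (z ^^ 1) (\<lambda>i. - e_last n i)" using transl_part_as_image by simp
    show "\<exists>a b. (z ^^ 1) u = (\<lambda>i. a * q i + b * z q i)" for u
      using qq by (intro exI[of _ "- u (n + 1)"] exI[of _ "mink n q u / mink n q q"])
        (simp add: mvec_eq_translation[of u] zq fun_eq_iff)
  qed
qed

lemma transl_part_nonzero:
  assumes "Z \<noteq> (\<lambda>_ _. 0)"
  shows "q \<noteq> (\<lambda>_. 0)"
proof
  assume q: "q = (\<lambda>_. 0)"
  have "mvec n Z (unit_vec j) = mvec n (\<lambda>_ _. 0) (unit_vec j)" for j
    using mvec_eq_translation[of "unit_vec j"] by (simp add: q mink_zero) (simp add: mvec_def fun_eq_iff)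
  then have "Z = (\<lambda>_ _. 0)"
    using so2n_supported[OF Z] by (intro mat_eq_if_columns_eq) (auto simp: supported_def)
  then show False using assms by simp
qed

end

section \<open>Conjugation into the root space\<close>

definition mink_reflection :: "nat \<Rightarrow> vec \<Rightarrow> real \<Rightarrow> vec \<Rightarrow> vec" where
  "mink_reflection n r k u = (\<lambda>i. u i - k * mink n r u * r i)"

definition reflection_mat :: "nat \<Rightarrow> vec \<Rightarrow> real \<Rightarrow> mat" where
  "reflection_mat n r k = (\<lambda>i j. if i \<le> n + 1 \<and> j \<le> n + 1 then unit_vec j i - k * mink n r (unit_vec j) * r i else 0)"

locale reflection_data =
  fixes n :: nat and r :: vec and k :: real
  assumes n3: "3 \<le> n" and rW: "minkvec n r" and kc: "k = 0 \<or> k * mink n r r = 2"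
begin

abbreviation "G \<equiv> mink_reflection n r k"
abbreviation "g \<equiv> reflection_mat n r k"

lemma r_0: "r 0 = 0" and r_top: "r (n+1) = 0" and r_big: "n + 1 < i \<Longrightarrow> r i = 0"
  using rW by (auto simp: minkvec_def)

lemma mink_r_units: "mink n r u = (\<Sum>j\<le>n+1. mink n r (unit_vec j) * u j)"
  using qform_unit_vec_expansion[OF n3, of r u] by (simp add: qform_minkvec[OF rW])

lemma mvec_reflection_mat: "vsupported n u \<Longrightarrow> mvec n g u = G u"
proof
  fix i assume u: "vsupported n u"
  show "mvec n g u i = G u i"
  proof (cases "i \<le> n + 1")
    case True
    have "mvec n g u i = (\<Sum>j\<le>n+1. unit_vec j i * u j - k * r i * (mink n r (unit_vec j) * u j))"
      using True by (auto simp: mvec_def reflection_mat_def algebra_simps intro!: sum.cong)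
    also have "\<dots> = (\<Sum>j\<le>n+1. unit_vec j i * u j) - k * r i * (\<Sum>j\<le>n+1. mink n r (unit_vec j) * u j)"
      by (simp only: sum_subtractf sum_distrib_left)
    also have "(\<Sum>j\<le>n+1. unit_vec j i * u j) = unit_vec i i * u i"
      by (rule sum_eq_single) (use True in \<open>auto simp: unit_vec_def\<close>)
    finally have "mvec n g u i = unit_vec i i * u i - k * r i * (\<Sum>j\<le>n+1. mink n r (unit_vec j) * u j)" .
    then show ?thesis by (simp only: mink_r_units[symmetric]) (simp add: mink_reflection_def unit_vec_def)
  next
    case False
    then show ?thesis using u r_big by (simp add: mvec_def mink_reflection_def vsupported_def)
  qed
qed

lemma supported_reflection_mat: "supported n g"
  by (auto simp: supported_def reflection_mat_def)

lemma vsupported_reflection: "vsupported n u \<Longrightarrow> vsupported n (G u)"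
  using r_big by (auto simp: vsupported_def mink_reflection_def)

lemma mink_reflection_right: "mink n r (G u) = mink n r u - k * mink n r u * mink n r r"
  unfolding mink_reflection_def by (simp only: mink_diff_right mink_scale_right)

lemma reflection_involutive: "G (G u) = u"
proof
  fix i
  have h: "G (G u) = (\<lambda>i. G u i - k * mink n r (G u) * r i)" by (rule mink_reflection_def)
  have "G (G u) i = u i - k * mink n r u * (2 - k * mink n r r) * r i"
    unfolding h mink_reflection_right by (simp add: mink_reflection_def algebra_simps)
  then show "G (G u) i = u i" using kc by auto
qed

lemma qform_reflection: "qform n (G u) (G v) = qform n u v"
proof -
  have m: "mink n (G u) (G v) = mink n u v + k * mink n r u * mink n r v * (k * mink n r r - 2)"
    unfolding mink_reflection_def
    by (simp only: mink_diff mink_diff_right mink_scale mink_scale_right)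
       (simp add: mink_sym[of n u r] mink_sym[of n v r] algebra_simps)
  have "k * mink n r u * mink n r v * (k * mink n r r - 2) = 0" using kc by auto
  then show ?thesis using m r_0 r_top by (simp add: qform_def mink_reflection_def)
qed

lemma reflection_e0: "G e0 = e0"
  by (simp add: mink_reflection_def mink_e0_right[OF n3])

lemma reflection_mat_Pgrp: "g \<in> Pgrp n"
  unfolding Pgrp_def
proof (intro CollectI conjI allI impI)
  show "g \<in> O2n n"
    by (rule O2nI[OF n3 supported_reflection_mat]) (simp add: mvec_reflection_mat qform_reflection)
  fix i assume "1 \<le> i \<and> i \<le> n + 1"
  moreover have "mink n r (unit_vec 0) = 0" using mink_e0_right[OF n3, of r] by (simp add: unit_vec_def e0_def)
  ultimately show "g i 0 = 0" by (simp add: reflection_mat_def unit_vec_def)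
qed

lemma reflection_diff: "G (\<lambda>i. a * u i - b * v i) = (\<lambda>i. a * G u i - b * G v i)"
  unfolding mink_reflection_def by (simp only: mink_diff_right mink_scale_right) (simp add: fun_eq_iff algebra_simps)

lemma reflection_top: "G u (n+1) = u (n+1)"
  using r_top by (simp add: mink_reflection_def)

lemma reflection_mat_square: "mmul n g g = idm n"
proof (intro ext)
  fix i j
  show "mmul n g g i j = idm n i j"
  proof (cases "i \<le> n + 1 \<and> j \<le> n + 1")
    case True
    then have "mmul n g g i j = G (G (unit_vec j)) i"
      using mmul_unit_vec[of i n j g g] mvec_reflection_mat vsupported_unit_vec vsupported_reflection by simp
    then show ?thesis using True by (simp add: reflection_involutive idm_def unit_vec_def)
  qed (auto simp: mmul_def idm_def)
qed

end

lemma bracket_cartanH: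
  assumes i: "i \<le> n + 1" and j: "j \<le> n + 1"
  shows "bracket n (cartanH n l m) A i j = (cartanH n l m i i - cartanH n l m j j) * A i j"
proof -
  have "(\<Sum>k\<le>n+1. cartanH n l m i k * A k j) = cartanH n l m i i * A i j"
    by (rule sum_eq_single) (use i in \<open>auto simp: cartanH_def\<close>)
  moreover have "(\<Sum>k\<le>n+1. A i k * cartanH n l m k j) = A i j * cartanH n l m j j"
    by (rule sum_eq_single) (use j in \<open>auto simp: cartanH_def\<close>)
  ultimately show ?thesis using i j by (simp add: bracket_def mmul_def algebra_simps)
qed

lemma root_space_abI:
  assumes n3: "3 \<le> n" and sA: "supported n A"
    and Af: "\<And>u. vsupported n u \<Longrightarrow> mvec n A u = (\<lambda>i. c * u n * e0 i - c * u (n + 1) * unit_vec 1 i)"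
  shows "A \<in> root_space_ab n"
  unfolding root_space_ab_def
proof (intro CollectI conjI allI)
  have qform_A: "qform n (mvec n A u) v = c * u n * v (n + 1) - c * u (n + 1) * v n"
    if u: "vsupported n u" for u v
    using qform_diff[of n "c * u n" e0 "c * u (n + 1)" "unit_vec 1" v]
    by (simp add: Af[OF u] qform_e0[OF n3] qform_e1[OF n3, unfolded One_nat_def])
  show "A \<in> so2n n"
  proof (rule so2nI[OF n3 sA])
    fix u v assume "vsupported n u" "vsupported n v"
    then show "qform n (mvec n A u) v = - qform n u (mvec n A v)"
      using qform_A qform_sym[of n u "mvec n A v"] by simp
  qed
  fix l m
  show "bracket n (cartanH n l m) A = (\<lambda>i j. (l + m) * A i j)"
  proof (intro ext)
    fix i j
    show "bracket n (cartanH n l m) A i j = (l + m) * A i j"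
    proof (cases "i \<le> n + 1 \<and> j \<le> n + 1")
      case True
      have Aij: "A i j = c * unit_vec j n * e0 i - c * unit_vec j (n + 1) * unit_vec 1 i"
        using Af[OF vsupported_unit_vec, of j] True mvec_unit_vec[of i n j A] by (metis (no_types, lifting))
      have "bracket n (cartanH n l m) A i j = (cartanH n l m i i - cartanH n l m j j) * A i j"
        using True by (intro bracket_cartanH) auto
      then show ?thesis unfolding Aij using n3 by (auto simp: unit_vec_def e0_def cartanH_def)
    next
      case False
      then show ?thesis using sA by (auto simp: bracket_def mmul_def supported_def)
    qed
  qed
qed

text \<open>A null vector q of R^{1,n-1} is sent to the line of e_1 by the reflection in the
  hyperplane orthogonal to q - e_1 (or by the identity if q is already on that line).\<close>
lemma null_vector_reflection:
  assumes n3: "3 \<le> n" and qW: "minkvec n q" and qq: "mink n q q = 0"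
  obtains r k c where "reflection_data n r k" and "mink_reflection n r k q = (\<lambda>i. c * unit_vec 1 i)"
proof (cases "q n = 0")
  case True
  have "q = (\<lambda>i. q 1 * unit_vec 1 i)" by (rule null_on_e1_line[OF n3 qW True qq])
  moreover have "reflection_data n (\<lambda>_. 0) 0" using n3 by unfold_locales (auto simp: minkvec_def)
  ultimately show ?thesis using that[of "\<lambda>_. 0" 0 "q 1"] by (simp add: mink_reflection_def)
next
  case False
  have u1W: "minkvec n (unit_vec 1)" using n3 by (auto simp: minkvec_def unit_vec_def)
  have qu1: "mink n q (unit_vec 1) = q n" by (rule mink_unit_vec_1[OF n3])
  have u1u1: "mink n (unit_vec 1) (unit_vec 1) = 0"
    using mink_unit_vec_1[OF n3, of "unit_vec 1"] n3 by (simp add: unit_vec_def)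
  define r where "r = (\<lambda>i. q i - unit_vec 1 i)"
  have rW: "minkvec n r" using qW u1W by (auto simp: r_def minkvec_def)
  have rr: "mink n r r = - 2 * q n"
    unfolding r_def mink_diff mink_diff_right qq qu1 u1u1 mink_sym[of n "unit_vec 1" q] by simp
  define k where "k = - 1 / q n"
  have "k * mink n r r = 2" using False by (simp add: rr k_def)
  then have "reflection_data n r k" using n3 rW by unfold_locales auto
  moreover have "mink n r q = - q n"
    unfolding r_def mink_diff qq qu1 mink_sym[of n "unit_vec 1" q] by simp
  then have "mink_reflection n r k q = (\<lambda>i. 1 * unit_vec 1 i)"
    using False by (simp add: mink_reflection_def k_def r_def)
  ultimately show ?thesis using that by blast
qed

lemma conj_null_translation_into_root_space:
  assumes n3: "3 \<le> n" and qW: "minkvec n q" and qq: "mink n q q = 0"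
    and Zf: "\<And>u. mvec n Z u = (\<lambda>i. mink n q u * e0 i - u (n + 1) * q i)"
  shows "\<exists>g\<in>Pgrp n. \<exists>ginv. mmul n g ginv = idm n \<and> supported n ginv
    \<and> mmul n (mmul n g Z) ginv \<in> root_space_ab n"
proof -
  obtain r k c where rd: "reflection_data n r k" and Gq: "mink_reflection n r k q = (\<lambda>i. c * unit_vec 1 i)"
    using null_vector_reflection[OF n3 qW qq] by blast
  interpret R: reflection_data n r k by (rule rd)
  let ?G = "mink_reflection n r k" and ?g = "reflection_mat n r k"
  have qG: "mink n q (?G u) = c * u n" for u
  proof -
    have "mink n q (?G u) = qform n (?G q) (?G (?G u))"
      by (simp add: qform_minkvec[OF qW] R.qform_reflection)
    also have "\<dots> = c * qform n (unit_vec 1) u" by (simp add: R.reflection_involutive Gq qform_scale)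
    finally show ?thesis by (simp add: qform_e1[OF n3, unfolded One_nat_def])
  qed
  have "mvec n (mmul n (mmul n ?g Z) ?g) u = (\<lambda>i. c * u n * e0 i - c * u (n + 1) * unit_vec 1 i)"
    if u: "vsupported n u" for u
  proof -
    have "mvec n (mmul n (mmul n ?g Z) ?g) u = ?G (mvec n Z (?G u))"
      unfolding mvec_mmul using R.mvec_reflection_mat[OF u] R.mvec_reflection_mat[OF vsupported_mvec] by simp
    also have "mvec n Z (?G u) = (\<lambda>i. (c * u n) * e0 i - u (n + 1) * q i)"
      using Zf qG R.reflection_top by simp
    also have "?G \<dots> = (\<lambda>i. (c * u n) * ?G e0 i - u (n + 1) * ?G q i)"
      by (rule R.reflection_diff)
    finally show ?thesis by (simp add: R.reflection_e0 Gq algebra_simps)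
  qed
  then have "mmul n (mmul n ?g Z) ?g \<in> root_space_ab n"
    by (rule root_space_abI[OF n3 supported_mmul])
  then show ?thesis using R.reflection_mat_Pgrp R.reflection_mat_square R.supported_reflection_mat by blast
qed

lemma lightlike_translationI:
  assumes P: "Z \<in> palg n" and qW: "minkvec n q" and q: "q \<noteq> (\<lambda>_. 0)" and qq: "mink n q q = 0"
    and Zf: "\<And>u. mvec n Z u = (\<lambda>i. mink n q u * e0 i - u (n + 1) * q i)"
  shows "lightlike_translation n Z"
  unfolding lightlike_translation_def
proof (intro conjI exI[of _ "\<lambda>i. - q i"] allI impI)
  show "minkvec n (\<lambda>i. - q i)" using qW by (auto simp: minkvec_def)
  show "(\<lambda>i. - q i) \<noteq> (\<lambda>_. 0)" using q by (auto simp: fun_eq_iff)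
  show "mink n (\<lambda>i. - q i) (\<lambda>i. - q i) = 0"
    using qq mink_scale[of n "-1" q] mink_scale_right[of n _ "-1" q] by simp
  \<comment> \<open>Z s(v) = <q, s(v)> e0 - q, since the lift s(v) has last coordinate 1\<close>
  show "pullback_field n Z v = (\<lambda>i. - q i)" for v
  proof
    fix i
    have "q 0 = 0" "q (n + 1) = 0" "n < i \<Longrightarrow> q i = 0" using qW by (auto simp: minkvec_def)
    then show "pullback_field n Z v i = - q i"
      by (auto simp: pullback_field_def Let_def Zf stereo_lift_def e0_def Suc_le_eq)
  qed
qed (rule P)

theorem proposition4p8:
  fixes n :: nat and X Y Z :: mat
  assumes "3 \<le> n"
    and "X \<in> so2n n" and "Y \<in> so2n n" and "Z \<in> so2n n"
    and "bracket n X Y = Z"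
    and "bracket n X Z = (\<lambda>_ _. 0)" and "bracket n Y Z = (\<lambda>_ _. 0)"
    and "Z \<noteq> (\<lambda>_ _. 0)"
    and "Z \<in> palg n"
  shows "lightlike_translation n Z \<and>
         (\<exists>g \<in> Pgrp n. \<exists>ginv. mmul n g ginv = idm n \<and> supported n ginv \<and>
             mmul n (mmul n g Z) ginv \<in> root_space_ab n)"
proof -
  interpret heisenberg_in_p n X Y Z
    using assms so2n_supported by unfold_locales
  have "transl_part n Z \<noteq> (\<lambda>_. 0)" by (rule transl_part_nonzero[OF assms(8)])
  then show ?thesis
    using lightlike_translationI[OF Zp minkvec_transl_part _ transl_part_null mvec_eq_translation]
      conj_null_translation_into_root_space[OF n3 minkvec_transl_part transl_part_null mvec_eq_translation]
    by blast
qed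

end
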